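(* Assume the continuity assumption holds and that the estimators $\hat p_k$ take values in $[0,1]$. Then there is a constant $C>0$, not depending on $n$, $N$, $u$ or the estimators, such that $$\mathbb{E}[\mathcal{R}_{\lambda^*}(\hat g)]-\mathcal{R}_{\lambda^*}(g^*_{\rm fair})\le C\Big(\mathbb{E}\big[\|\hat{\mathbf p}-\mathbf p\|_1\big]+\sum_{s\in\{-1,1\}}\mathbb{E}|\hat\pi_s-\pi_s|+\mathbb{E}[\mathcal{U}(\hat g)]+u\Big),$$ where $\|\hat{\mathbf p}-\mathbf p\|_1=\sum_{k=1}^K|\hat p_k(X,S)-p_k(X,S)|$ with $(X,S)$ a new independent draw (the expectation being over it and the data).
   Context: $(X,S,Y)\sim\mathbb{P}$, $X\in\mathcal{X}\subset\mathbb{R}^d$, $S\in\{-1,1\}$, $Y\in[K]$, $\pi_s=\mathbb{P}(S=s)>0$, $p_k(x,s)=\mathbb{P}(Y=k\mid X=x,S=s)$. Risk $\mathcal{R}(g)=\mathbb{P}(g(X,S)\ne Y)$; unfairness $\mathcal{U}(g)=\max_k|\mathbb{P}(g(X,S)=k\mid S=1)-\mathbb{P}(g(X,S)=k\mid S=-1)|$; fair-risk $\mathcal{R}_\lambda(g)=\mathcal{R}(g)+\sum_k\lambda_k[\mathbb{P}(g(X,S)=k\mid S=1)-\mathbb{P}(g(X,S)=k\mid S=-1)]$. Continuity assumption: for all $k\neq j$ and $s$, $t\mapsto\mathbb{P}(p_k(X,S)-p_j(X,S)\le t\mid S=s)$ is continuous. $\lambda^*$ minimizes $\lambda\mapsto\sum_s\mathbb{E}[\max_k(\pi_sp_k(X,s)-s\lambda_k)\mid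 S=s]$ over $\mathbb{R}^K$, and $g^*_{\rm fair}(x,s)\in\arg\max_k(\pi_sp_k(x,s)-s\lambda^*_k)$ (an optimal exactly fair classifier). Plug-in construction: $\mathcal{D}_n$ is a labeled i.i.d. sample from $\mathbb{P}$ from which estimators $\hat p_k$ are built. Independently, $\mathcal{D}'_N$ consists of $N$ i.i.d. copies of $(X,S)$; $N_s$ is the number with $S=s$, $\hat\pi_s=N_s/N$, and $X^s_1,\dots,X^s_{N_s}$ are the features with $S=s$. Fix $u>0$; $(\zeta^s_{k,i})$ are i.i.d. Uniform$[0,u]$ independent of everything, $\bar p_k(x,s,\zeta)=\hat p_k(x,s)+\zeta$. $\hat\lambda$ minimizes $\lambda\mapsto\sum_s\frac1{N_s}\sum_{i=1}^{N_s}\max_k(\hat\pi_s\bar p_k(X^s_i,s,\zeta^s_{k,i})-s\lambda_k)$. The randomized classifier is $\hat g(x,s)=\arg\max_k(\hat\pi_s\bar p_k(x,s,\zeta_k)-s\hat\lambda_k)$ with fresh i.i.d. Uniform$[0,u]$ perturbations $(\zeta_k)$ at each prediction. $\mathcal{R}_{\lambda^*}(\hat g)$ and $\mathcal{U}(\hat g)$ are computed conditionally on the data and $(\zeta^s_{k,i})$, over a new $(X,S,Y)$ and the fresh perturbations. *)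

theory Defs
  imports "HOL-Probability.Probability"
begin

text \<open>Observations are triples (X,S,Y) of type 'x * int * nat, where
  S is the sensitive attribute (in {-1,1}) and Y the label (in {1..K}).\<close>

definition XS_space :: "('x::euclidean_space \<times> int) measure" where
  "XS_space = (borel :: 'x measure) \<Otimes>\<^sub>M (count_space UNIV :: int measure)"

definition XSY_space :: "('x::euclidean_space \<times> int \<times> nat) measure" where
  "XSY_space = (borel :: 'x measure) \<Otimes>\<^sub>M ((count_space UNIV :: int measure) \<Otimes>\<^sub>M (count_space UNIV :: nat measure))"

definition piS :: "('x \<times> int \<times> nat) measure \<Rightarrow> int \<Rightarrow> real" where
  "piS P s = measure P {w \<in> space P. fst (snd w) = s}"

text \<open>Randomized classifiers: g x s z, with z a perturbation drawn from Z, fresh at each prediction.\<close>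

definition pred_rate :: "('x \<times> int \<times> nat) measure \<Rightarrow> 'z measure \<Rightarrow> ('x \<Rightarrow> int \<Rightarrow> 'z \<Rightarrow> nat) \<Rightarrow> nat \<Rightarrow> int \<Rightarrow> real" where
  "pred_rate P Z g k s =
     measure (P \<Otimes>\<^sub>M Z) {(w, z) \<in> space (P \<Otimes>\<^sub>M Z). g (fst w) (fst (snd w)) z = k \<and> fst (snd w) = s} / piS P s"

definition rrisk :: "('x \<times> int \<times> nat) measure \<Rightarrow> 'z measure \<Rightarrow> ('x \<Rightarrow> int \<Rightarrow> 'z \<Rightarrow> nat) \<Rightarrow> real" where
  "rrisk P Z g = measure (P \<Otimes>\<^sub>M Z) {(w, z) \<in> space (P \<Otimes>\<^sub>M Z). g (fst w) (fst (snd w)) z \<noteq> snd (snd w)}"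

definition runfair :: "('x \<times> int \<times> nat) measure \<Rightarrow> 'z measure \<Rightarrow> nat \<Rightarrow> ('x \<Rightarrow> int \<Rightarrow> 'z \<Rightarrow> nat) \<Rightarrow> real" where
  "runfair P Z K g = Max ((\<lambda>k. \<bar>pred_rate P Z g k 1 - pred_rate P Z g k (-1)\<bar>) ` {1..K})"

definition rfrisk :: "('x \<times> int \<times> nat) measure \<Rightarrow> 'z measure \<Rightarrow> nat \<Rightarrow> (nat \<Rightarrow> real) \<Rightarrow> ('x \<Rightarrow> int \<Rightarrow> 'z \<Rightarrow> nat) \<Rightarrow> real" where
  "rfrisk P Z K lam g = rrisk P Z g + (\<Sum>k\<in>{1..K}. lam k * (pred_rate P Z g k 1 - pred_rate P Z g k (-1)))"

text \<open>Trivial perturbation space, used to view deterministic classifiers as randomized ones.\<close>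
definition Zdet :: "unit measure" where
  "Zdet = return (count_space UNIV) ()"

definition argmaxK :: "nat \<Rightarrow> (nat \<Rightarrow> real) \<Rightarrow> nat" where
  "argmaxK K f = (LEAST k. k \<in> {1..K} \<and> (\<forall>j\<in>{1..K}. f j \<le> f k))"

definition fair_obj :: "('x \<times> int \<times> nat) measure \<Rightarrow> (nat \<Rightarrow> 'x \<Rightarrow> int \<Rightarrow> real) \<Rightarrow> nat \<Rightarrow> (nat \<Rightarrow> real) \<Rightarrow> real" where
  "fair_obj P p K lam = (\<Sum>s\<in>{-1,1::int}.
     (\<integral>w. (if fst (snd w) = s then Max ((\<lambda>k. piS P s * p k (fst w) s - of_int s * lam k) ` {1..K}) else 0) \<partial>P)
     / piS P s)"

definition gfair :: "('x \<times> int \<times> nat) measure \<Rightarrow> (nat \<Rightarrow> 'x \<Rightarrow> int \<Rightarrow> real) \<Rightarrow> nat \<Rightarrow> (nat \<Rightarrow> real) \<Rightarrow> 'x \<Rightarrow> int \<Rightarrow> nat" where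
  "gfair P p K lam x s = argmaxK K (\<lambda>k. piS P s * p k x s - of_int s * lam k)"

text \<open>Unlabeled sample D'_N : (nat => 'x * int), indices i < N.\<close>
definition Nsz :: "nat \<Rightarrow> (nat \<Rightarrow> 'x \<times> int) \<Rightarrow> int \<Rightarrow> nat" where
  "Nsz N d' s = card {i \<in> {..<N}. snd (d' i) = s}"

definition pihat :: "nat \<Rightarrow> (nat \<Rightarrow> 'x \<times> int) \<Rightarrow> int \<Rightarrow> real" where
  "pihat N d' s = real (Nsz N d' s) / real N"

text \<open>Empirical objective; the perturbation zeta^s_{k,i} is z (s,k,i), with i the index in D'_N.\<close>
definition emp_obj :: "nat \<Rightarrow> nat \<Rightarrow> (nat \<Rightarrow> 'x \<Rightarrow> int \<Rightarrow> real) \<Rightarrow> (nat \<Rightarrow> 'x \<times> int) \<Rightarrow> (int \<times> nat \<times> nat \<Rightarrow> real) \<Rightarrow> (nat \<Rightarrow> real) \<Rightarrow> real" where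
  "emp_obj K N ph d' z lam = (\<Sum>s\<in>{-1,1::int}.
     (1 / real (Nsz N d' s)) *
     (\<Sum>i\<in>{i \<in> {..<N}. snd (d' i) = s}.
        Max ((\<lambda>k. pihat N d' s * (ph k (fst (d' i)) s + z (s, k, i)) - of_int s * lam k) ` {1..K})))"

definition ghat :: "nat \<Rightarrow> nat \<Rightarrow> (nat \<Rightarrow> 'x \<Rightarrow> int \<Rightarrow> real) \<Rightarrow> (nat \<Rightarrow> 'x \<times> int) \<Rightarrow> (nat \<Rightarrow> real) \<Rightarrow> 'x \<Rightarrow> int \<Rightarrow> (nat \<Rightarrow> real) \<Rightarrow> nat" where
  "ghat K N ph d' lamh x s zeta = argmaxK K (\<lambda>k. pihat N d' s * (ph k x s + zeta k) - of_int s * lamh k)"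

definition unif :: "real \<Rightarrow> real measure" where
  "unif u = uniform_measure lborel {0..u}"

definition Zfresh :: "nat \<Rightarrow> real \<Rightarrow> (nat \<Rightarrow> real) measure" where
  "Zfresh K u = PiM {1..K} (\<lambda>_. unif u)"

definition Zemp :: "nat \<Rightarrow> nat \<Rightarrow> real \<Rightarrow> (int \<times> nat \<times> nat \<Rightarrow> real) measure" where
  "Zemp K N u = PiM ({-1,1} \<times> {1..K} \<times> {..<N}) (\<lambda>_. unif u)"

definition sampleD :: "nat \<Rightarrow> ('x::euclidean_space \<times> int \<times> nat) measure \<Rightarrow> (nat \<Rightarrow> 'x \<times> int \<times> nat) measure" where
  "sampleD n P = PiM {..<n} (\<lambda>_. P)"

definition sampleD' :: "nat \<Rightarrow> ('x::euclidean_space \<times> int \<times> nat) measure \<Rightarrow> (nat \<Rightarrow> 'x \<times> int) measure" where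
  "sampleD' N P = PiM {..<N} (\<lambda>_. distr P XS_space (\<lambda>w. (fst w, fst (snd w))))"

end

(*
  With score lam w k = p k x s - s * lam k / pi s, the fair risk of any randomized classifier g is
  1 - E[score lam W (g X S)], while the dual objective fair_obj lam is E[max_k score lam W k], which
  g*_fair attains. For the plug-in rule gh with estimated multipliers lh, the excess fair risk at
  lam* therefore splits into
    (fair_obj lam* - fair_obj lh) + (fair_obj lh - E[score lh W gh]) + sum_k (lam*_k - lh_k) * gap_k,
  where gap_k is the difference of the rates of class k in the two groups. The first term is
  nonpositive because lam* minimises fair_obj. The second is at most 2/min_s pi_s times the error of
  the perturbed estimated scores, |ph - p|_1 + sum_s |pih_s - pi_s| + u, since gh maximises them.
  As the gaps sum to zero, the third is at most K times the spread of lam* - lh times the unfairness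
  of gh, and both spreads are bounded through the objectives that lam* and lh minimise. If a group
  is absent from the unlabeled sample, then |pih_s - pi_s| = pi_s and the trivial bound suffices.
*)
theory Submission
  imports Defs
begin

section \<open>Measure-theoretic preliminaries\<close>

lemma (in finite_measure) integrable_bounded:
  fixes f :: "'a \<Rightarrow> real"
  assumes "f \<in> borel_measurable M" "\<And>x. x \<in> space M \<Longrightarrow> \<bar>f x\<bar> \<le> B"
  shows "integrable M f"
  using assms by (intro integrable_const_bound[where B=B]) (auto intro!: AE_I2)

lemma (in finite_measure) measure_Collect_eq_integral:
  assumes "Measurable.pred M R"
  shows "measure M {x \<in> space M. R x} = (\<integral>x. (if R x then 1 else 0) \<partial>M)"
proof -
  have "measure M {x \<in> space M. R x} = (\<integral>x. indicator {x \<in> space M. R x} x \<partial>M)"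
    by (simp add: Int_absorb2)
  also have "\<dots> = (\<integral>x. (if R x then 1 else 0) \<partial>M)"
    by (rule Bochner_Integration.integral_cong) (auto simp: indicator_def)
  finally show ?thesis .
qed

lemma pred_eq_countable[measurable (raw)]:
  fixes f g :: "'a \<Rightarrow> 'c::countable"
  assumes [measurable]: "f \<in> M \<rightarrow>\<^sub>M count_space UNIV" "g \<in> M \<rightarrow>\<^sub>M count_space UNIV"
  shows "Measurable.pred M (\<lambda>x. f x = g x)"
proof -
  have "(\<lambda>x. f x = g x) = (\<lambda>x. \<exists>c. f x = c \<and> g x = c)" by auto
  moreover have "Measurable.pred M (\<lambda>x. \<exists>c. f x = c \<and> g x = c)" by measurable
  ultimately show ?thesis by simp
qed

lemma borel_measurable_countable_fun:
  fixes f :: "'a \<Rightarrow> 'c::countable" and h :: "'c \<Rightarrow> real"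
  assumes "f \<in> M \<rightarrow>\<^sub>M count_space UNIV"
  shows "(\<lambda>x. h (f x)) \<in> borel_measurable M"
  using measurable_compose[OF assms, of h borel] by simp

lemma integral_pair_fst:
  fixes h :: "'a \<Rightarrow> real"
  assumes "prob_space M2" "h \<in> borel_measurable M1"
  shows "(\<integral>x. h (fst x) \<partial>(M1 \<Otimes>\<^sub>M M2)) = (\<integral>x. h x \<partial>M1)"
proof -
  have "integral\<^sup>L (distr (M1 \<Otimes>\<^sub>M M2) M1 fst) h = (\<integral>x. h (fst x) \<partial>(M1 \<Otimes>\<^sub>M M2))"
    by (rule integral_distr) (auto simp: assms)
  then show ?thesis using prob_space.distr_pair_fst[OF assms(1), of M1] by simp
qed

lemma integrable_pair_fst:
  fixes h :: "'a \<Rightarrow> real"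
  assumes "prob_space M2" "integrable M1 h"
  shows "integrable (M1 \<Otimes>\<^sub>M M2) (\<lambda>x. h (fst x))"
proof -
  have "integrable (distr (M1 \<Otimes>\<^sub>M M2) M1 fst) h \<longleftrightarrow> integrable (M1 \<Otimes>\<^sub>M M2) (\<lambda>x. h (fst x))"
    using measurable_fst borel_measurable_integrable[OF assms(2)] by (rule integrable_distr_eq)
  then show ?thesis using assms prob_space.distr_pair_fst[OF assms(1), of M1] by simp
qed

lemma integral_pair_snd:
  fixes h :: "'b \<Rightarrow> real"
  assumes M1: "prob_space M1" and M2: "prob_space M2" and h: "h \<in> borel_measurable M2"
  shows "(\<integral>x. h (snd x) \<partial>(M1 \<Otimes>\<^sub>M M2)) = (\<integral>x. h x \<partial>M2)"
proof -
  interpret pair_prob_space M1 M2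
    using M1 M2 by (simp add: pair_prob_space_def pair_sigma_finite_def prob_space_imp_sigma_finite)
  have "(\<lambda>x. h (snd x)) \<in> borel_measurable (M1 \<Otimes>\<^sub>M M2)" using h by measurable
  from integral_product_swap[OF this]
  have "(\<integral>x. h (snd x) \<partial>(M1 \<Otimes>\<^sub>M M2)) = (\<integral>y. h (fst y) \<partial>(M2 \<Otimes>\<^sub>M M1))"
    by (simp add: case_prod_beta')
  also have "\<dots> = (\<integral>x. h x \<partial>M2)" by (rule integral_pair_fst[OF M1 h])
  finally show ?thesis .
qed

lemma AE_pair_fst:
  assumes "prob_space M2" "AE x in M1. R x"
  shows "AE x in M1 \<Otimes>\<^sub>M M2. R (fst x)"
  using AE_distrD[of fst "M1 \<Otimes>\<^sub>M M2" M1 R] prob_space.distr_pair_fst[OF assms(1), of M1] assms(2)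
  by (metis measurable_fst)

lemma AE_pair_snd:
  assumes "prob_space M2" "AE y in M2. R y"
  shows "AE x in M1 \<Otimes>\<^sub>M M2. R (snd x)"
proof -
  interpret M2: prob_space M2 by (rule assms(1))
  from assms(2) obtain N where N: "{y \<in> space M2. \<not> R y} \<subseteq> N" "emeasure M2 N = 0" "N \<in> sets M2"
    by (rule AE_E)
  show ?thesis
  proof (rule AE_I)
    show "{x \<in> space (M1 \<Otimes>\<^sub>M M2). \<not> R (snd x)} \<subseteq> space M1 \<times> N"
      using N(1) by (auto simp: space_pair_measure)
    show "emeasure (M1 \<Otimes>\<^sub>M M2) (space M1 \<times> N) = 0"
      using N(2,3) by (simp add: M2.emeasure_pair_measure_Times)
  qed (use N(3) in auto)
qed

lemma borel_measurable_measure_section: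
  assumes Q: "prob_space Q" and R: "Measurable.pred (T \<Otimes>\<^sub>M Q) (\<lambda>x. R (fst x) (snd x))"
  shows "(\<lambda>t. measure Q {q \<in> space Q. R t q}) \<in> borel_measurable T"
proof -
  interpret Q: prob_space Q by (rule Q)
  define A where "A = {x \<in> space (T \<Otimes>\<^sub>M Q). R (fst x) (snd x)}"
  have "A \<in> sets (T \<Otimes>\<^sub>M Q)" using R unfolding A_def by (simp add: pred_def)
  then have "(\<lambda>t. emeasure Q (Pair t -` A)) \<in> borel_measurable T"
    by (rule Q.measurable_emeasure_Pair)
  then have "(\<lambda>t. enn2real (emeasure Q (Pair t -` A))) \<in> borel_measurable T"
    by measurable
  moreover have "enn2real (emeasure Q (Pair t -` A)) = measure Q {q \<in> space Q. R t q}" if "t \<in> space T" for t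
  proof -
    have "Pair t -` A = {q \<in> space Q. R t q}" using that by (auto simp: A_def space_pair_measure)
    then show ?thesis by (simp add: measure_def)
  qed
  ultimately show ?thesis by (rule measurable_cong[THEN iffD1, rotated]) simp
qed

lemma measurable_snd_XS[measurable]: "snd \<in> XS_space \<rightarrow>\<^sub>M count_space UNIV"
  unfolding XS_space_def by measurable

section \<open>Maxima, averages and the empirical objective\<close>

lemma argmaxK_spec:
  assumes "K \<ge> 1"
  shows "argmaxK K f \<in> {1..K}" and "\<And>j. j \<in> {1..K} \<Longrightarrow> f j \<le> f (argmaxK K f)"
proof -
  have "Max (f ` {1..K}) \<in> f ` {1..K}" using assms by simp
  then obtain k where k: "k \<in> {1..K}" "Max (f ` {1..K}) = f k" by auto
  then have "k \<in> {1..K} \<and> (\<forall>j\<in>{1..K}. f j \<le> f k)"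
    by (metis Max_ge finite_atLeastAtMost finite_imageI image_eqI)
  then have "argmaxK K f \<in> {1..K} \<and> (\<forall>j\<in>{1..K}. f j \<le> f (argmaxK K f))"
    unfolding argmaxK_def by (rule LeastI)
  then show "argmaxK K f \<in> {1..K}" and "\<And>j. j \<in> {1..K} \<Longrightarrow> f j \<le> f (argmaxK K f)" by auto
qed

lemma measurable_argmaxK:
  fixes F :: "'a \<Rightarrow> nat \<Rightarrow> real"
  assumes F: "\<And>k. k \<in> {1..K} \<Longrightarrow> (\<lambda>t. F t k) \<in> borel_measurable M"
  shows "(\<lambda>t. argmaxK K (F t)) \<in> M \<rightarrow>\<^sub>M count_space UNIV"
proof -
  have "Measurable.pred M (\<lambda>t. k \<in> {1..K} \<and> (\<forall>j\<in>{1..K}. F t j \<le> F t k))" for k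
  proof (cases "k \<in> {1..K}")
    case True
    have "Measurable.pred M (\<lambda>t. \<forall>j\<in>{1..K}. F t j \<le> F t k)"
    proof (rule pred_intros_finite(3))
      fix j assume "j \<in> {1..K}"
      then show "Measurable.pred M (\<lambda>t. F t j \<le> F t k)"
        unfolding pred_def by (rule borel_measurable_le[OF F F[OF True]])
    qed simp
    then show ?thesis using True by simp
  next
    case False
    then have "(\<lambda>t. k \<in> {1..K} \<and> (\<forall>j\<in>{1..K}. F t j \<le> F t k)) = (\<lambda>t. False)" by auto
    then show ?thesis by simp
  qed
  then show ?thesis unfolding argmaxK_def by (rule measurable_Least)
qed

lemma Max_divide:
  fixes f :: "'a \<Rightarrow> real"
  assumes "finite A" "A \<noteq> {}" "c > 0"
  shows "Max (f ` A) / c = Max ((\<lambda>k. f k / c) ` A)"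
proof -
  have "mono (\<lambda>x::real. x / c)" using assms(3) by (intro monoI) (simp add: divide_right_mono)
  from mono_Max_commute[OF this, of "f ` A"] assms show ?thesis by (simp add: image_image)
qed

lemma average_ge:
  fixes F :: "'a \<Rightarrow> real"
  assumes "card I > 0" "\<And>i. i \<in> I \<Longrightarrow> v \<le> F i"
  shows "v \<le> (1 / real (card I)) * (\<Sum>i\<in>I. F i)"
proof -
  have "real (card I) * v \<le> (\<Sum>i\<in>I. F i)" using sum_mono[of I "\<lambda>_. v" F] assms(2) by simp
  then show ?thesis using assms(1) by (simp add: field_simps)
qed

lemma average_le:
  fixes F :: "'a \<Rightarrow> real"
  assumes "card I > 0" "\<And>i. i \<in> I \<Longrightarrow> F i \<le> v"
  shows "(1 / real (card I)) * (\<Sum>i\<in>I. F i) \<le> v"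
proof -
  have "(\<Sum>i\<in>I. F i) \<le> real (card I) * v" using sum_mono[of I F "\<lambda>_. v"] assms(2) by simp
  then show ?thesis using assms(1) by (simp add: field_simps)
qed

lemma abs_Max_le:
  fixes f :: "'a \<Rightarrow> real"
  assumes "finite A" "A \<noteq> {}" "\<And>k. k \<in> A \<Longrightarrow> \<bar>f k\<bar> \<le> B"
  shows "\<bar>Max (f ` A)\<bar> \<le> B"
proof -
  have "Max (f ` A) \<in> f ` A" using assms(1,2) by simp
  then show ?thesis using assms(3) by auto
qed

lemma pihat_nonneg: "0 \<le> pihat N d' s"
  by (simp add: pihat_def)

lemma pihat_le_1: "pihat N d' s \<le> 1"
proof -
  have "Nsz N d' s \<le> N"
    unfolding Nsz_def using card_mono[of "{..<N}" "{i \<in> {..<N}. snd (d' i) = s}"] by auto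
  then show ?thesis unfolding pihat_def by (cases "N = 0") (auto simp: divide_le_eq_1)
qed

lemma emp_obj_split:
  "emp_obj K N ph d' z lam =
     (1 / real (Nsz N d' (-1))) * (\<Sum>i\<in>{i \<in> {..<N}. snd (d' i) = -1}.
        Max ((\<lambda>k. pihat N d' (-1) * (ph k (fst (d' i)) (-1) + z (-1, k, i)) + lam k) ` {1..K}))
   + (1 / real (Nsz N d' 1)) * (\<Sum>i\<in>{i \<in> {..<N}. snd (d' i) = 1}.
        Max ((\<lambda>k. pihat N d' 1 * (ph k (fst (d' i)) 1 + z (1, k, i)) - lam k) ` {1..K}))"
  unfolding emp_obj_def by simp

lemma lam_diff_le_emp_obj:
  assumes N: "Nsz N d' 1 > 0" "Nsz N d' (-1) > 0"
    and nonneg: "\<And>s k i. s \<in> {-1,1} \<Longrightarrow> k \<in> {1..K} \<Longrightarrow> i < N \<Longrightarrow> 0 \<le> ph k (fst (d' i)) s + z (s,k,i)"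
    and i: "i \<in> {1..K}" and j: "j \<in> {1..K}"
  shows "lam j - lam i \<le> emp_obj K N ph d' z lam"
proof -
  have "- lam i \<le> (1 / real (Nsz N d' 1)) * (\<Sum>l\<in>{l \<in> {..<N}. snd (d' l) = 1}.
      Max ((\<lambda>k. pihat N d' 1 * (ph k (fst (d' l)) 1 + z (1, k, l)) - lam k) ` {1..K}))"
    unfolding Nsz_def
  proof (rule average_ge)
    fix l assume "l \<in> {l \<in> {..<N}. snd (d' l) = 1}"
    then have "- lam i \<le> pihat N d' 1 * (ph i (fst (d' l)) 1 + z (1, i, l)) - lam i"
      using nonneg[of 1 i l] i pihat_nonneg[of N d' 1] by simp
    also have "\<dots> \<le> Max ((\<lambda>k. pihat N d' 1 * (ph k (fst (d' l)) 1 + z (1, k, l)) - lam k) ` {1..K})"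
      using i by (intro Max_ge) auto
    finally show "- lam i \<le> \<dots>" .
  qed (use N in \<open>simp add: Nsz_def\<close>)
  moreover have "lam j \<le> (1 / real (Nsz N d' (-1))) * (\<Sum>l\<in>{l \<in> {..<N}. snd (d' l) = -1}.
      Max ((\<lambda>k. pihat N d' (-1) * (ph k (fst (d' l)) (-1) + z (-1, k, l)) + lam k) ` {1..K}))"
    unfolding Nsz_def
  proof (rule average_ge)
    fix l assume "l \<in> {l \<in> {..<N}. snd (d' l) = -1}"
    then have "lam j \<le> pihat N d' (-1) * (ph j (fst (d' l)) (-1) + z (-1, j, l)) + lam j"
      using nonneg[of "-1" j l] j pihat_nonneg[of N d' "-1"] by simp
    also have "\<dots> \<le> Max ((\<lambda>k. pihat N d' (-1) * (ph k (fst (d' l)) (-1) + z (-1, k, l)) + lam k) ` {1..K})"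
      using j by (intro Max_ge) auto
    finally show "lam j \<le> \<dots>" .
  qed (use N in \<open>simp add: Nsz_def\<close>)
  ultimately show ?thesis by (simp add: emp_obj_split)
qed

lemma emp_obj_zero_le:
  assumes N: "Nsz N d' 1 > 0" "Nsz N d' (-1) > 0" and K: "K \<ge> 1"
    and bounded: "\<And>s k i. s \<in> {-1,1} \<Longrightarrow> k \<in> {1..K} \<Longrightarrow> i < N \<Longrightarrow> ph k (fst (d' i)) s + z (s,k,i) \<le> B"
    and nonneg: "\<And>s k i. s \<in> {-1,1} \<Longrightarrow> k \<in> {1..K} \<Longrightarrow> i < N \<Longrightarrow> 0 \<le> ph k (fst (d' i)) s + z (s,k,i)"
  shows "emp_obj K N ph d' z (\<lambda>_. 0) \<le> 2 * B"
proof -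
  have avg: "(1 / real (Nsz N d' s)) * (\<Sum>l\<in>{l \<in> {..<N}. snd (d' l) = s}.
      Max ((\<lambda>k. pihat N d' s * (ph k (fst (d' l)) s + z (s, k, l)) - of_int s * 0) ` {1..K})) \<le> B"
    if s: "s \<in> {-1,1}" and Ns: "Nsz N d' s > 0" for s
    unfolding Nsz_def
  proof (rule average_le)
    fix l assume l: "l \<in> {l \<in> {..<N}. snd (d' l) = s}"
    show "Max ((\<lambda>k. pihat N d' s * (ph k (fst (d' l)) s + z (s, k, l)) - of_int s * 0) ` {1..K}) \<le> B"
    proof (rule Max.boundedI)
      fix y assume "y \<in> (\<lambda>k. pihat N d' s * (ph k (fst (d' l)) s + z (s, k, l)) - of_int s * 0) ` {1..K}"
      then obtain k where k: "k \<in> {1..K}" and y: "y = pihat N d' s * (ph k (fst (d' l)) s + z (s, k, l))"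
        by auto
      have "pihat N d' s * (ph k (fst (d' l)) s + z (s, k, l)) \<le> 1 * B"
        using pihat_nonneg pihat_le_1 bounded[OF s k] nonneg[OF s k] l
        by (intro mult_mono) (auto intro: order_trans)
      then show "y \<le> B" using y by simp
    qed (use K in auto)
  qed (use Ns in \<open>simp add: Nsz_def\<close>)
  show ?thesis using avg[of 1] avg[of "-1"] N unfolding emp_obj_def by simp
qed

lemma emp_obj_minimizer_spread:
  assumes N: "Nsz N d' 1 > 0" "Nsz N d' (-1) > 0" and K: "K \<ge> 1"
    and lh_min: "\<And>lam. emp_obj K N ph d' z lh \<le> emp_obj K N ph d' z lam"
    and ph_range: "\<And>k x s. 0 \<le> ph k x s \<and> ph k x s \<le> 1"
    and z_range: "\<And>s k i. s \<in> {-1,1} \<Longrightarrow> k \<in> {1..K} \<Longrightarrow> i < N \<Longrightarrow> 0 \<le> z (s,k,i) \<and> z (s,k,i) \<le> u"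
    and k: "k \<in> {1..K}"
  shows "\<bar>lh k - lh 1\<bar> \<le> 2 + 2 * u"
proof -
  have nonneg: "0 \<le> ph k (fst (d' i)) s + z (s,k,i)"
    if "s \<in> {-1,1}" "k \<in> {1..K}" "i < N" for s k i
    using ph_range[of k "fst (d' i)" s] z_range[OF that] by simp
  have "emp_obj K N ph d' z (\<lambda>_. 0) \<le> 2 * (1 + u)"
  proof (rule emp_obj_zero_le[OF N K])
    fix s :: int and k i assume "s \<in> {-1,1}" "k \<in> {1..K}" "i < N"
    then show "ph k (fst (d' i)) s + z (s,k,i) \<le> 1 + u"
      using ph_range[of k "fst (d' i)" s] z_range[of s k i] by (intro add_mono) auto
  qed (rule nonneg)
  moreover have "1 \<in> {1..K}" using K by simp
  ultimately show ?thesis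
    using lam_diff_le_emp_obj[where K=K and ph=ph and z=z, OF N nonneg, of 1 k lh]
      lam_diff_le_emp_obj[where K=K and ph=ph and z=z, OF N nonneg, of k 1 lh]
      lh_min[of "\<lambda>_. 0"] k by (simp add: abs_le_iff)
qed

section \<open>Perturbations and the plug-in rule\<close>

lemma prob_space_unif: "u > 0 \<Longrightarrow> prob_space (unif u)"
  unfolding unif_def by (intro prob_space_uniform_measure) auto

lemma AE_PiM_unif_bounded:
  assumes "finite I" "u > 0"
  shows "AE z in PiM I (\<lambda>_. unif u). \<forall>i\<in>I. 0 \<le> z i \<and> z i \<le> u"
proof -
  have "AE x in unif u. 0 \<le> x \<and> x \<le> u"
    unfolding unif_def by (rule AE_uniform_measureI) (auto intro!: AE_I2)
  then show ?thesis
    using assms by (intro eventually_ball_finite ballI AE_PiM_component prob_space_unif)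
qed

lemma prob_space_Zfresh: "u > 0 \<Longrightarrow> prob_space (Zfresh K u)"
  unfolding Zfresh_def by (intro prob_space_PiM prob_space_unif)

lemma prob_space_Zemp: "u > 0 \<Longrightarrow> prob_space (Zemp K N u)"
  unfolding Zemp_def by (intro prob_space_PiM prob_space_unif)

lemma measurable_Zfresh_component: "k \<in> {1..K} \<Longrightarrow> (\<lambda>\<zeta>. \<zeta> k) \<in> borel_measurable (Zfresh K u)"
proof -
  assume "k \<in> {1..K}"
  then have "(\<lambda>\<zeta>. \<zeta> k) \<in> Zfresh K u \<rightarrow>\<^sub>M unif u"
    unfolding Zfresh_def by (rule measurable_component_singleton)
  moreover have "sets (unif u) = sets borel" by (simp add: unif_def)
  ultimately show ?thesis using measurable_cong_sets[OF refl, of "unif u" borel "Zfresh K u"] by simp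
qed

lemma measurable_ghat:
  assumes "\<And>k. (\<lambda>xs. ph k (fst xs) (snd xs)) \<in> borel_measurable XS_space"
  shows "(\<lambda>q. ghat K N ph d' lam (fst (fst q)) (snd (fst q)) (snd q))
           \<in> (XS_space \<Otimes>\<^sub>M Zfresh K u) \<rightarrow>\<^sub>M count_space UNIV"
  unfolding ghat_def
proof (rule measurable_argmaxK)
  fix k assume k: "k \<in> {1..K}"
  have S: "(\<lambda>q. snd (fst q)) \<in> (XS_space \<Otimes>\<^sub>M Zfresh K u) \<rightarrow>\<^sub>M count_space UNIV" by measurable
  have "(\<lambda>q. ph k (fst (fst q)) (snd (fst q))) \<in> borel_measurable (XS_space \<Otimes>\<^sub>M Zfresh K u)"
    using measurable_compose[OF measurable_fst[of XS_space "Zfresh K u"] assms[of k]] by (simp add: comp_def)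
  moreover have "(\<lambda>q. snd q k) \<in> borel_measurable (XS_space \<Otimes>\<^sub>M Zfresh K u)"
    using measurable_compose[OF measurable_snd[of XS_space "Zfresh K u"] measurable_Zfresh_component[OF k]]
    by (simp add: comp_def)
  ultimately show "(\<lambda>q. pihat N d' (snd (fst q)) * (ph k (fst (fst q)) (snd (fst q)) + snd q k)
      - of_int (snd (fst q)) * lam k) \<in> borel_measurable (XS_space \<Otimes>\<^sub>M Zfresh K u)"
    using borel_measurable_countable_fun[OF S, of "pihat N d'"] borel_measurable_countable_fun[OF S, of of_int]
    by measurable
qed

lemma ghat_range: "K \<ge> 1 \<Longrightarrow> ghat K N ph d' lam x s \<zeta> \<in> {1..K}"
  unfolding ghat_def by (rule argmaxK_spec(1))

lemma AE_pair_Zfresh_bounded: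
  assumes "u > 0"
  shows "AE q in M \<Otimes>\<^sub>M Zfresh K u. \<forall>k\<in>{1..K}. 0 \<le> snd q k \<and> snd q k \<le> u"
proof (rule AE_pair_snd[OF prob_space_Zfresh[OF assms]])
  show "AE \<zeta> in Zfresh K u. \<forall>k\<in>{1..K}. 0 \<le> \<zeta> k \<and> \<zeta> k \<le> u"
    unfolding Zfresh_def using assms by (intro AE_PiM_unif_bounded) auto
qed

lemma perturbed_score_error:
  fixes a b c d z u :: real
  assumes "0 \<le> a" "a \<le> 1" "0 \<le> d" "d \<le> 1" "0 \<le> z" "z \<le> u"
  shows "\<bar>a * (b + z) - c * d\<bar> \<le> \<bar>b - d\<bar> + \<bar>a - c\<bar> + u"
proof -
  have "a * (b + z) - c * d = a * (b - d) + (a - c) * d + a * z" by (simp add: algebra_simps)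
  moreover have "\<bar>a * (b - d)\<bar> \<le> \<bar>b - d\<bar>" using assms by (simp add: abs_mult mult_left_le_one_le)
  moreover have "\<bar>(a - c) * d\<bar> \<le> \<bar>a - c\<bar>" using assms by (simp add: abs_mult mult_right_le_one_le)
  moreover have "0 \<le> a * z" "a * z \<le> u"
    using assms mult_mono[of a 1 z u] by auto
  ultimately show ?thesis by linarith
qed

lemma argmaxK_near_optimal:
  assumes "K \<ge> 1" "\<And>k. k \<in> {1..K} \<Longrightarrow> \<bar>E k - T k\<bar> \<le> \<delta>" "j \<in> {1..K}"
  shows "T j \<le> T (argmaxK K E) + 2 * \<delta>"
  using assms(2)[OF assms(3)] assms(2)[OF argmaxK_spec(1)[OF assms(1), of E]]
    argmaxK_spec(2)[OF assms(1) assms(3), of E]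
  by linarith

lemma excess_bound_arith:
  fixes m K a b U u :: real
  assumes "0 < m" "m \<le> 1" "0 \<le> K" "0 \<le> a" "0 \<le> b" "0 \<le> U" "U \<le> 1" "0 \<le> u"
  shows "2 / m * (a + b + u) + K * (3 + 2 * u) * U \<le> (3 + 3 * K) / m * (a + b + U + u)"
proof -
  let ?X = "3 * K * (a + b + U + u)"
  have "K * (3 + 2 * u) * U = 3 * (K * U) + 2 * (K * (U * u))" by (simp add: algebra_simps)
  moreover have "?X = 3 * (K * a) + 3 * (K * b) + 3 * (K * U) + 3 * (K * u)" by (simp add: algebra_simps)
  moreover have "K * (U * u) \<le> K * u"
    using assms by (intro mult_left_mono) (auto simp: mult_left_le_one_le)
  moreover have "0 \<le> K * a" "0 \<le> K * b" "0 \<le> K * u" using assms by auto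
  ultimately have "K * (3 + 2 * u) * U \<le> ?X" by linarith
  also have "?X \<le> ?X / m"
  proof -
    have "?X * m \<le> ?X" by (rule mult_right_le_one_le) (use assms in auto)
    then show ?thesis using assms by (simp add: le_divide_eq)
  qed
  finally have "K * (3 + 2 * u) * U \<le> ?X / m" .
  moreover have "2 / m * (a + b + u) \<le> 3 * (a + b + U + u) / m"
  proof -
    have "2 * (a + b + u) \<le> 3 * (a + b + U + u)" using assms by simp
    then show ?thesis using assms by (simp add: divide_right_mono)
  qed
  moreover have "(3 + 3 * K) / m * (a + b + U + u) = 3 * (a + b + U + u) / m + ?X / m"
    using assms by (simp add: field_simps)
  ultimately show ?thesis by linarith
qed

section \<open>Scores and the fair risk\<close>

locale fair_classification =
  fixes P :: "('x::euclidean_space \<times> int \<times> nat) measure"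
    and K :: nat
    and p :: "nat \<Rightarrow> 'x \<Rightarrow> int \<Rightarrow> real"
  assumes P_prob: "prob_space P"
    and P_sets: "sets P = sets XSY_space"
    and P_supp: "AE w in P. fst (snd w) \<in> {-1, 1} \<and> snd (snd w) \<in> {1..K}"
    and pi_pos: "\<forall>s\<in>{-1, 1}. piS P s > 0"
    and p_meas: "\<forall>k. (\<lambda>(x, s). p k x s) \<in> borel_measurable XS_space"
    and p_range: "\<forall>k x s. 0 \<le> p k x s \<and> p k x s \<le> 1"
    and p_cond: "\<forall>k A. A \<in> sets XS_space \<longrightarrow>
        measure P {w \<in> space P. (fst w, fst (snd w)) \<in> A \<and> snd (snd w) = k}
        = (\<integral>w. indicator A (fst w, fst (snd w)) * p k (fst w) (fst (snd w)) \<partial>P)"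
begin

sublocale PP: prob_space P by (rule P_prob)

lemma K_ge_1: "K \<ge> 1"
proof (rule ccontr)
  assume "\<not> K \<ge> 1"
  with P_supp have "AE w in P. False" by (auto elim: AE_mp)
  then show False by simp
qed

lemma measurable_XS[measurable]: "(\<lambda>w. (fst w, fst (snd w))) \<in> P \<rightarrow>\<^sub>M XS_space"
  unfolding measurable_cong_sets[OF P_sets refl] XS_space_def XSY_space_def by measurable

lemma measurable_S[measurable]: "(\<lambda>w. fst (snd w)) \<in> P \<rightarrow>\<^sub>M count_space UNIV"
  unfolding measurable_cong_sets[OF P_sets refl] XSY_space_def by measurable

lemma measurable_Y[measurable]: "(\<lambda>w. snd (snd w)) \<in> P \<rightarrow>\<^sub>M count_space UNIV"
  unfolding measurable_cong_sets[OF P_sets refl] XSY_space_def by measurable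

lemma measurable_p_XS[measurable]: "(\<lambda>xs. p k (fst xs) (snd xs)) \<in> borel_measurable XS_space"
  using p_meas by (simp add: case_prod_beta')

lemma measurable_p[measurable]: "(\<lambda>w. p k (fst w) (fst (snd w))) \<in> borel_measurable P"
  using measurable_compose[OF measurable_XS measurable_p_XS[of k]] by simp

lemma abs_diff_p_le_1: "0 \<le> a \<Longrightarrow> a \<le> 1 \<Longrightarrow> \<bar>a - p k x s\<bar> \<le> 1"
  using p_range[rule_format, of k x s] by (simp add: abs_le_iff)

lemma piS_pos: "s \<in> {-1,1} \<Longrightarrow> piS P s > 0"
  using pi_pos by auto

lemma piS_nonneg: "0 \<le> piS P s"
  by (simp add: piS_def)

lemma piS_le_1: "piS P s \<le> 1"
  unfolding piS_def by (rule PP.prob_le_1)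

lemma piS_eq_integral: "piS P s = (\<integral>w. (if fst (snd w) = s then 1 else 0) \<partial>P)"
  unfolding piS_def by (rule PP.measure_Collect_eq_integral) measurable

text \<open>The score of class \<open>k\<close> is the paper's \<open>\<pi>\<^sub>s p\<^sub>k(x,s) - s \<lambda>\<^sub>k\<close> divided by \<open>\<pi>\<^sub>s\<close>,
  so that \<open>rfrisk\<close> is one minus its mean at the predicted class and \<open>fair_obj\<close> is the mean of
  its maximum over the classes.\<close>
definition score :: "(nat \<Rightarrow> real) \<Rightarrow> 'x \<times> int \<times> nat \<Rightarrow> nat \<Rightarrow> real" where
  "score lam w k = p k (fst w) (fst (snd w)) -
     (if fst (snd w) \<in> {-1,1} then of_int (fst (snd w)) * lam k / piS P (fst (snd w)) else 0)"

definition max_score :: "(nat \<Rightarrow> real) \<Rightarrow> 'x \<times> int \<times> nat \<Rightarrow> real" where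
  "max_score lam w = (if fst (snd w) \<in> {-1,1} then Max ((\<lambda>k. score lam w k) ` {1..K}) else 0)"

definition score_bound :: "(nat \<Rightarrow> real) \<Rightarrow> real" where
  "score_bound lam = 1 + (\<Sum>k\<in>{1..K}. \<bar>lam k\<bar>) * (1 / piS P 1 + 1 / piS P (-1))"

lemma score_bound_nonneg: "0 \<le> score_bound lam"
  using piS_pos[of 1] piS_pos[of "-1"] unfolding score_bound_def
  by (intro add_nonneg_nonneg mult_nonneg_nonneg sum_nonneg) auto

lemma abs_score_le: "k \<in> {1..K} \<Longrightarrow> \<bar>score lam w k\<bar> \<le> score_bound lam"
proof -
  assume k: "k \<in> {1..K}"
  have pi: "piS P 1 > 0" "piS P (-1) > 0" using pi_pos by auto
  let ?L = "if fst (snd w) \<in> {-1,1} then of_int (fst (snd w)) * lam k / piS P (fst (snd w)) else 0"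
  have "\<bar>?L\<bar> \<le> \<bar>lam k\<bar> * (1 / piS P 1 + 1 / piS P (-1))"
    using pi by (auto simp: abs_mult abs_divide field_simps)
  also have "\<dots> \<le> (\<Sum>k\<in>{1..K}. \<bar>lam k\<bar>) * (1 / piS P 1 + 1 / piS P (-1))"
    using k pi by (intro mult_right_mono member_le_sum) auto
  finally show ?thesis
    using p_range unfolding score_def score_bound_def by (smt (verit))
qed

lemma abs_max_score_le: "\<bar>max_score lam w\<bar> \<le> score_bound lam"
  unfolding max_score_def using K_ge_1 score_bound_nonneg
  by (auto intro!: abs_Max_le abs_score_le)

lemma measurable_score[measurable]: "(\<lambda>w. score lam w k) \<in> borel_measurable P"
proof -
  have "(\<lambda>w. (\<lambda>s. if s \<in> {-1,1} then of_int s * lam k / piS P s else 0) (fst (snd w))) \<in> borel_measurable P"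
    by (rule borel_measurable_countable_fun) measurable
  then show ?thesis unfolding score_def by measurable
qed

lemma measurable_max_score[measurable]: "max_score lam \<in> borel_measurable P"
proof -
  have [measurable]: "(\<lambda>w. Max ((\<lambda>k. score lam w k) ` {1..K})) \<in> borel_measurable P"
    by (rule borel_measurable_Max) auto
  have [measurable]: "Measurable.pred P (\<lambda>w. fst (snd w) \<in> {-1,1})"
    using measurable_compose[OF measurable_S, of "\<lambda>s. s \<in> {-1,1::int}" "count_space UNIV"] by simp
  show ?thesis unfolding max_score_def by measurable
qed

lemma integrable_max_score: "integrable P (max_score lam)"
  by (rule PP.integrable_bounded[OF measurable_max_score abs_max_score_le])

lemma pred_rate_nonneg: "0 \<le> pred_rate P Z g k s"
  by (simp add: pred_rate_def piS_def)

context
  fixes Z :: "'z measure" and g :: "'x \<Rightarrow> int \<Rightarrow> 'z \<Rightarrow> nat"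
  assumes Z: "prob_space Z"
    and g_meas: "(\<lambda>q. g (fst (fst q)) (snd (fst q)) (snd q)) \<in> (XS_space \<Otimes>\<^sub>M Z) \<rightarrow>\<^sub>M count_space UNIV"
    and g_range: "\<And>x s z. g x s z \<in> {1..K}"
begin

interpretation ZZ: prob_space Z by (rule Z)
interpretation PZ: pair_prob_space P Z by unfold_locales

abbreviation gQ :: "('x \<times> int \<times> nat) \<times> 'z \<Rightarrow> nat" where
  "gQ q \<equiv> g (fst (fst q)) (fst (snd (fst q))) (snd q)"

lemma measurable_gQ[measurable]: "gQ \<in> (P \<Otimes>\<^sub>M Z) \<rightarrow>\<^sub>M count_space UNIV"
proof -
  have "(\<lambda>q. (fst (fst q), fst (snd (fst q)))) \<in> (P \<Otimes>\<^sub>M Z) \<rightarrow>\<^sub>M XS_space"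
    using measurable_compose[OF measurable_fst measurable_XS] by (simp add: comp_def)
  then have "(\<lambda>q. ((fst (fst q), fst (snd (fst q))), snd q)) \<in> (P \<Otimes>\<^sub>M Z) \<rightarrow>\<^sub>M (XS_space \<Otimes>\<^sub>M Z)"
    by measurable
  from measurable_compose[OF this g_meas] show ?thesis by simp
qed

lemma measurable_g_section: "z \<in> space Z \<Longrightarrow> (\<lambda>w. g (fst w) (fst (snd w)) z) \<in> P \<rightarrow>\<^sub>M count_space UNIV"
proof -
  assume "z \<in> space Z"
  then have "(\<lambda>w. ((fst w, fst (snd w)), z)) \<in> P \<rightarrow>\<^sub>M (XS_space \<Otimes>\<^sub>M Z)" by measurable
  from measurable_compose[OF this g_meas] show ?thesis by simp
qed

lemma measurable_p_pair[measurable]: "(\<lambda>q. p k (fst (fst q)) (fst (snd (fst q)))) \<in> borel_measurable (P \<Otimes>\<^sub>M Z)"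
  using measurable_compose[OF measurable_fst measurable_p] by (simp add: comp_def)

lemma integrable_pred_indicator: "Measurable.pred (P \<Otimes>\<^sub>M Z) R \<Longrightarrow> integrable (P \<Otimes>\<^sub>M Z) (\<lambda>q. if R q then 1 else 0 :: real)"
  by (rule PZ.integrable_bounded[where B=1]) auto

lemma integrable_p_gQ: "integrable (P \<Otimes>\<^sub>M Z) (\<lambda>q. p (gQ q) (fst (fst q)) (fst (snd (fst q))))"
proof (rule PZ.integrable_bounded[where B=1])
  show "(\<lambda>q. p (gQ q) (fst (fst q)) (fst (snd (fst q)))) \<in> borel_measurable (P \<Otimes>\<^sub>M Z)"
    by (rule measurable_compose_countable[OF measurable_p_pair measurable_gQ])
qed (use p_range in auto)

lemma integrable_score_gQ: "integrable (P \<Otimes>\<^sub>M Z) (\<lambda>q. score lam (fst q) (gQ q))"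
proof (rule PZ.integrable_bounded[where B="score_bound lam"])
  have "(\<lambda>q. score lam (fst q) k) \<in> borel_measurable (P \<Otimes>\<^sub>M Z)" for k
    using measurable_compose[OF measurable_fst measurable_score] by (simp add: comp_def)
  then show "(\<lambda>q. score lam (fst q) (gQ q)) \<in> borel_measurable (P \<Otimes>\<^sub>M Z)"
    by (rule measurable_compose_countable[OF _ measurable_gQ])
qed (use g_range in \<open>auto intro: abs_score_le\<close>)

text \<open>This is where the regression function enters: given \<open>(X,S)\<close>, the label equals \<open>k\<close>
  with probability \<open>p\<^sub>k(X,S)\<close>, independently of the perturbation.\<close>
lemma integral_gQ_eq_Y: "(\<integral>q. (if gQ q = k \<and> snd (snd (fst q)) = k then 1 else 0) \<partial>(P \<Otimes>\<^sub>M Z))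
   = (\<integral>q. (if gQ q = k then p k (fst (fst q)) (fst (snd (fst q))) else 0) \<partial>(P \<Otimes>\<^sub>M Z))"
proof -
  let ?f = "\<lambda>w z. (if g (fst w) (fst (snd w)) z = k \<and> snd (snd w) = k then 1 else (0::real))"
  let ?h = "\<lambda>w z. (if g (fst w) (fst (snd w)) z = k then p k (fst w) (fst (snd w)) else 0)"
  have i1: "integrable (P \<Otimes>\<^sub>M Z) (case_prod ?f)"
    by (rule PZ.integrable_bounded[where B=1]) (auto simp: case_prod_beta')
  have i2: "integrable (P \<Otimes>\<^sub>M Z) (case_prod ?h)"
    using p_range by (intro PZ.integrable_bounded[where B=1]) (auto simp: case_prod_beta')
  have "(\<integral>w. ?f w z \<partial>P) = (\<integral>w. ?h w z \<partial>P)" if z: "z \<in> space Z" for z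
  proof -
    note [measurable] = measurable_g_section[OF z]
    define A where "A = {xs. g (fst xs) (snd xs) z = k}"
    have A: "A \<in> sets XS_space"
    proof -
      have "A = (\<lambda>xs. g (fst xs) (snd xs) z) -` {k} \<inter> space XS_space"
        by (auto simp: A_def XS_space_def space_pair_measure)
      moreover have "(\<lambda>xs. g (fst xs) (snd xs) z) \<in> XS_space \<rightarrow>\<^sub>M count_space UNIV"
      proof -
        have "(\<lambda>xs. (xs, z)) \<in> XS_space \<rightarrow>\<^sub>M (XS_space \<Otimes>\<^sub>M Z)" using z by measurable
        from measurable_compose[OF this g_meas] show ?thesis by simp
      qed
      ultimately show ?thesis using measurable_sets[of _ XS_space "count_space UNIV" "{k}"] by simp
    qed
    have "(\<integral>w. ?f w z \<partial>P) = measure P {w \<in> space P. (fst w, fst (snd w)) \<in> A \<and> snd (snd w) = k}"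
      unfolding A_def by (subst PP.measure_Collect_eq_integral) auto
    also have "\<dots> = (\<integral>w. indicator A (fst w, fst (snd w)) * p k (fst w) (fst (snd w)) \<partial>P)"
      using p_cond A by blast
    also have "\<dots> = (\<integral>w. ?h w z \<partial>P)"
      by (rule Bochner_Integration.integral_cong) (auto simp: A_def indicator_def)
    finally show ?thesis .
  qed
  then have "(\<integral>z. (\<integral>w. ?f w z \<partial>P) \<partial>Z) = (\<integral>z. (\<integral>w. ?h w z \<partial>P) \<partial>Z)"
    by (rule Bochner_Integration.integral_cong[OF refl])
  then show ?thesis
    using PZ.integral_snd[OF i1] PZ.integral_snd[OF i2] by (simp add: case_prod_beta')
qed

lemma pred_rate_eq_integral: "pred_rate P Z g k s =
   (\<integral>q. (if gQ q = k \<and> fst (snd (fst q)) = s then 1 else 0) \<partial>(P \<Otimes>\<^sub>M Z)) / piS P s"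
proof -
  have "{(w, z) \<in> space (P \<Otimes>\<^sub>M Z). g (fst w) (fst (snd w)) z = k \<and> fst (snd w) = s}
     = {q \<in> space (P \<Otimes>\<^sub>M Z). gQ q = k \<and> fst (snd (fst q)) = s}"
    by auto
  then show ?thesis unfolding pred_rate_def
    by (simp add: PZ.measure_Collect_eq_integral)
qed

lemma rrisk_eq_integral: "rrisk P Z g = 1 - (\<integral>q. p (gQ q) (fst (fst q)) (fst (snd (fst q))) \<partial>(P \<Otimes>\<^sub>M Z))"
proof -
  let ?Y = "\<lambda>q. snd (snd (fst q))"
  let ?pk = "\<lambda>k q. p k (fst (fst q)) (fst (snd (fst q)))"
  have delta: "(\<Sum>k\<in>{1..K}. if gQ q = k then f k else 0) = f (gQ q)" for f :: "nat \<Rightarrow> real" and q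
    using g_range by (simp add: sum.delta)
  have "{(w, z) \<in> space (P \<Otimes>\<^sub>M Z). g (fst w) (fst (snd w)) z \<noteq> snd (snd w)}
     = {q \<in> space (P \<Otimes>\<^sub>M Z). gQ q \<noteq> ?Y q}" by auto
  then have "rrisk P Z g = (\<integral>q. (if gQ q \<noteq> ?Y q then 1 else 0) \<partial>(P \<Otimes>\<^sub>M Z))"
    unfolding rrisk_def by (simp add: PZ.measure_Collect_eq_integral)
  also have "\<dots> = (\<integral>q. 1 - (\<Sum>k\<in>{1..K}. if gQ q = k \<and> ?Y q = k then 1 else 0) \<partial>(P \<Otimes>\<^sub>M Z))"
  proof (rule Bochner_Integration.integral_cong[OF refl])
    fix q
    have "(\<Sum>k\<in>{1..K}. if gQ q = k \<and> ?Y q = k then 1 else 0)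
        = (\<Sum>k\<in>{1..K}. if gQ q = k then (if ?Y q = gQ q then 1 else 0) else 0 :: real)"
      by (rule sum.cong) auto
    also have "\<dots> = (if ?Y q = gQ q then 1 else 0)"
      by (rule delta)
    finally show "(if gQ q \<noteq> ?Y q then 1 else 0) = 1 - (\<Sum>k\<in>{1..K}. if gQ q = k \<and> ?Y q = k then 1 else 0 :: real)"
      by auto
  qed
  also have "\<dots> = 1 - (\<Sum>k\<in>{1..K}. (\<integral>q. (if gQ q = k \<and> ?Y q = k then 1 else 0) \<partial>(P \<Otimes>\<^sub>M Z)))"
    by (simp add: Bochner_Integration.integral_diff Bochner_Integration.integral_sum
        integrable_pred_indicator PZ.prob_space)
  also have "\<dots> = 1 - (\<Sum>k\<in>{1..K}. (\<integral>q. (if gQ q = k then ?pk k q else 0) \<partial>(P \<Otimes>\<^sub>M Z)))"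
    by (simp add: integral_gQ_eq_Y)
  also have "\<dots> = 1 - (\<integral>q. (\<Sum>k\<in>{1..K}. if gQ q = k then ?pk k q else 0) \<partial>(P \<Otimes>\<^sub>M Z))"
    using p_range
    by (subst Bochner_Integration.integral_sum) (auto intro!: PZ.integrable_bounded[where B=1])
  also have "\<dots> = 1 - (\<integral>q. ?pk (gQ q) q \<partial>(P \<Otimes>\<^sub>M Z))"
    by (simp only: delta)
  finally show ?thesis .
qed

lemma penalty_eq_integral: "(\<Sum>k\<in>{1..K}. lam k * (pred_rate P Z g k 1 - pred_rate P Z g k (-1)))
   = (\<integral>q. (if fst (snd (fst q)) \<in> {-1,1}
            then of_int (fst (snd (fst q))) * lam (gQ q) / piS P (fst (snd (fst q))) else 0) \<partial>(P \<Otimes>\<^sub>M Z))"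
proof -
  let ?S = "\<lambda>q. fst (snd (fst q))"
  let ?A = "\<lambda>k s q. (if gQ q = k \<and> ?S q = s then 1 else (0::real))"
  have iA: "integrable (P \<Otimes>\<^sub>M Z) (?A k s)" for k s by (intro integrable_pred_indicator) measurable
  have "(\<Sum>k\<in>{1..K}. lam k * (pred_rate P Z g k 1 - pred_rate P Z g k (-1)))
      = (\<Sum>k\<in>{1..K}. (\<integral>q. lam k * (?A k 1 q / piS P 1 - ?A k (-1) q / piS P (-1)) \<partial>(P \<Otimes>\<^sub>M Z)))"
    using iA by (simp add: pred_rate_eq_integral Bochner_Integration.integral_diff)
  also have "\<dots> = (\<integral>q. (\<Sum>k\<in>{1..K}. lam k * (?A k 1 q / piS P 1 - ?A k (-1) q / piS P (-1))) \<partial>(P \<Otimes>\<^sub>M Z))"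
    using iA by (subst Bochner_Integration.integral_sum) auto
  also have "\<dots> = (\<integral>q. (if ?S q \<in> {-1,1} then of_int (?S q) * lam (gQ q) / piS P (?S q) else 0) \<partial>(P \<Otimes>\<^sub>M Z))"
  proof (rule Bochner_Integration.integral_cong[OF refl])
    fix q
    have "(\<Sum>k\<in>{1..K}. lam k * (?A k 1 q / piS P 1 - ?A k (-1) q / piS P (-1)))
        = (\<Sum>k\<in>{1..K}. if gQ q = k then lam (gQ q) * ((if ?S q = 1 then 1 else 0) / piS P 1
                                       - (if ?S q = -1 then 1 else 0) / piS P (-1)) else 0)"
      by (rule sum.cong) auto
    also have "\<dots> = (if ?S q \<in> {-1,1} then of_int (?S q) * lam (gQ q) / piS P (?S q) else 0)"
      using g_range by (auto simp: sum.delta)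
    finally show "(\<Sum>k\<in>{1..K}. lam k * (?A k 1 q / piS P 1 - ?A k (-1) q / piS P (-1)))
        = (if ?S q \<in> {-1,1} then of_int (?S q) * lam (gQ q) / piS P (?S q) else 0)" .
  qed
  finally show ?thesis .
qed

lemma rfrisk_eq_integral_score: "rfrisk P Z K lam g = 1 - (\<integral>q. score lam (fst q) (gQ q) \<partial>(P \<Otimes>\<^sub>M Z))"
proof -
  let ?pG = "\<lambda>q. p (gQ q) (fst (fst q)) (fst (snd (fst q)))"
  have "rfrisk P Z K lam g
      = 1 - (\<integral>q. ?pG q \<partial>(P \<Otimes>\<^sub>M Z)) + (\<integral>q. ?pG q - score lam (fst q) (gQ q) \<partial>(P \<Otimes>\<^sub>M Z))"
    unfolding rfrisk_def rrisk_eq_integral penalty_eq_integral by (simp add: score_def)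
  then show ?thesis using integrable_p_gQ integrable_score_gQ by simp
qed

lemma sum_pred_rate: "s \<in> {-1,1} \<Longrightarrow> (\<Sum>k\<in>{1..K}. pred_rate P Z g k s) = 1"
proof -
  assume s: "s \<in> {-1,1}"
  let ?S = "\<lambda>q. fst (snd (fst q))"
  have "(\<Sum>k\<in>{1..K}. pred_rate P Z g k s)
      = (\<integral>q. (\<Sum>k\<in>{1..K}. if gQ q = k \<and> ?S q = s then 1 else 0) \<partial>(P \<Otimes>\<^sub>M Z)) / piS P s"
    by (simp add: pred_rate_eq_integral sum_divide_distrib Bochner_Integration.integral_sum
        integrable_pred_indicator)
  also have "\<dots> = (\<integral>q. (if ?S q = s then 1 else 0) \<partial>(P \<Otimes>\<^sub>M Z)) / piS P s"
  proof -
    have "(\<Sum>k\<in>{1..K}. if gQ q = k \<and> ?S q = s then 1 else 0)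
        = (\<Sum>k\<in>{1..K}. if gQ q = k then (if ?S q = s then 1 else 0) else 0 :: real)" for q
      by (rule sum.cong) auto
    then show ?thesis using g_range by (simp add: sum.delta)
  qed
  also have "(\<integral>q. (if ?S q = s then 1 else 0) \<partial>(P \<Otimes>\<^sub>M Z)) = piS P s"
    using integral_pair_fst[OF Z, of "\<lambda>w. if fst (snd w) = s then 1 else 0 :: real" P]
    by (simp add: piS_eq_integral)
  finally show ?thesis using piS_pos[OF s] by simp
qed

lemma pred_rate_le_1: "s \<in> {-1,1} \<Longrightarrow> k \<in> {1..K} \<Longrightarrow> pred_rate P Z g k s \<le> 1"
  using member_le_sum[of k "{1..K}" "\<lambda>j. pred_rate P Z g j s"] sum_pred_rate[of s]
  by (simp add: pred_rate_nonneg)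

lemma runfair_le_1: "runfair P Z K g \<le> 1"
proof -
  have "\<bar>pred_rate P Z g k 1 - pred_rate P Z g k (-1)\<bar> \<le> 1" if "k \<in> {1..K}" for k
    using pred_rate_le_1[of 1 k] pred_rate_le_1[of "-1" k]
      pred_rate_nonneg[of Z g k 1] pred_rate_nonneg[of Z g k "-1"] that
    by (simp add: abs_le_iff)
  then show ?thesis unfolding runfair_def using K_ge_1 by (subst Max_le_iff) auto
qed

text \<open>Since the rate gaps sum to zero, only the spread of the weights around \<open>c 1\<close> matters.\<close>
lemma penalty_le_runfair:
  fixes c :: "nat \<Rightarrow> real"
  assumes D: "\<And>k. k \<in> {1..K} \<Longrightarrow> \<bar>c k - c 1\<bar> \<le> D"
  shows "(\<Sum>k\<in>{1..K}. c k * (pred_rate P Z g k 1 - pred_rate P Z g k (-1))) \<le> real K * D * runfair P Z K g"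
proof -
  let ?d = "\<lambda>k. pred_rate P Z g k 1 - pred_rate P Z g k (-1)"
  have "(\<Sum>k\<in>{1..K}. ?d k) = 0"
    using sum_pred_rate[of 1] sum_pred_rate[of "-1"] by (simp add: sum_subtractf)
  then have "(\<Sum>k\<in>{1..K}. c k * ?d k) = (\<Sum>k\<in>{1..K}. (c k - c 1) * ?d k)"
    by (simp add: left_diff_distrib sum_subtractf sum_distrib_left[symmetric])
  also have "\<dots> \<le> (\<Sum>k\<in>{1..K}. D * runfair P Z K g)"
  proof (rule sum_mono)
    fix k assume k: "k \<in> {1..K}"
    have "(c k - c 1) * ?d k \<le> \<bar>c k - c 1\<bar> * \<bar>?d k\<bar>" by (simp add: abs_mult[symmetric])
    also have "\<dots> \<le> D * runfair P Z K g"
      using D[OF k] k by (intro mult_mono) (auto simp: runfair_def intro!: Max_ge)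
    finally show "(c k - c 1) * ?d k \<le> D * runfair P Z K g" .
  qed
  finally show ?thesis by simp
qed

end

lemma pred_rate_le_inverse_piS:
  assumes "prob_space Z" "s \<in> {-1,1}"
  shows "pred_rate P Z g k s \<le> 1 / piS P s"
proof -
  interpret prob_space Z by (rule assms(1))
  interpret pair_prob_space P Z by unfold_locales
  have "measure (P \<Otimes>\<^sub>M Z) {(w, z) \<in> space (P \<Otimes>\<^sub>M Z). g (fst w) (fst (snd w)) z = k \<and> fst (snd w) = s} \<le> 1"
    by (rule prob_le_1)
  then show ?thesis unfolding pred_rate_def using piS_pos[OF assms(2)] by (simp add: divide_right_mono)
qed

lemma abs_rate_gap_le:
  assumes "prob_space Z"
  shows "\<bar>pred_rate P Z g k 1 - pred_rate P Z g k (-1)\<bar> \<le> 1 / piS P 1 + 1 / piS P (-1)"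
  using pred_rate_le_inverse_piS[OF assms, of 1 g k] pred_rate_le_inverse_piS[OF assms, of "-1" g k]
    pred_rate_nonneg[of Z g k 1] pred_rate_nonneg[of Z g k "-1"] piS_pos[of 1] piS_pos[of "-1"]
  by (simp add: abs_le_iff)

lemma abs_runfair_le:
  assumes "prob_space Z"
  shows "\<bar>runfair P Z K g\<bar> \<le> 1 / piS P 1 + 1 / piS P (-1)"
proof -
  have "runfair P Z K g \<le> 1 / piS P 1 + 1 / piS P (-1)"
    unfolding runfair_def using K_ge_1 abs_rate_gap_le[OF assms] by (subst Max_le_iff) auto
  moreover have "0 \<le> runfair P Z K g"
    unfolding runfair_def using K_ge_1 by (intro order_trans[OF abs_ge_zero Max_ge]) auto
  ultimately show ?thesis by simp
qed

lemma abs_rfrisk_le: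
  assumes "prob_space Z"
  shows "\<bar>rfrisk P Z K lam g\<bar> \<le> score_bound lam"
proof -
  interpret prob_space Z by (rule assms)
  interpret pair_prob_space P Z by unfold_locales
  let ?B = "1 / piS P 1 + 1 / piS P (-1)"
  have "\<bar>\<Sum>k\<in>{1..K}. lam k * (pred_rate P Z g k 1 - pred_rate P Z g k (-1))\<bar>
      \<le> (\<Sum>k\<in>{1..K}. \<bar>lam k\<bar> * ?B)"
    by (rule order_trans[OF sum_abs sum_mono])
       (simp add: abs_mult abs_rate_gap_le[OF assms] mult_left_mono)
  moreover have "\<bar>rrisk P Z g\<bar> \<le> 1" unfolding rrisk_def using prob_le_1 by simp
  ultimately show ?thesis unfolding rfrisk_def score_bound_def by (simp add: sum_distrib_right)
qed

lemma fair_obj_eq_integral: "fair_obj P p K lam = (\<integral>w. max_score lam w \<partial>P)"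
proof -
  let ?M = "\<lambda>s w. if fst (snd w) = s then max_score lam w else 0"
  have eq: "(if fst (snd w) = s then Max ((\<lambda>k. piS P s * p k (fst w) s - of_int s * lam k) ` {1..K}) else 0)
            / piS P s = ?M s w" if s: "s \<in> {-1,1}" for s w
  proof (cases "fst (snd w) = s")
    case True
    have "Max ((\<lambda>k. piS P s * p k (fst w) s - of_int s * lam k) ` {1..K}) / piS P s
        = Max ((\<lambda>k. (piS P s * p k (fst w) s - of_int s * lam k) / piS P s) ` {1..K})"
      using K_ge_1 piS_pos[OF s] by (intro Max_divide) auto
    also have "(\<lambda>k. (piS P s * p k (fst w) s - of_int s * lam k) / piS P s) = (\<lambda>k. score lam w k)"
      using True s piS_pos[OF s] by (auto simp: score_def field_simps)
    finally show ?thesis using True s by (simp add: max_score_def)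
  qed simp
  have int: "integrable P (?M s)" for s
    by (rule PP.integrable_bounded[where B="score_bound lam"])
       (auto intro: abs_max_score_le score_bound_nonneg)
  have "fair_obj P p K lam = (\<Sum>s\<in>{-1,1::int}. \<integral>w. ?M s w \<partial>P)"
    unfolding fair_obj_def
  proof (rule sum.cong[OF refl])
    fix s :: int assume "s \<in> {-1,1}"
    then show "(\<integral>w. (if fst (snd w) = s then Max ((\<lambda>k. piS P s * p k (fst w) s - of_int s * lam k) ` {1..K})
                  else 0) \<partial>P) / piS P s = (\<integral>w. ?M s w \<partial>P)"
      by (simp add: eq flip: integral_divide_zero)
  qed
  also have "\<dots> = (\<integral>w. (\<Sum>s\<in>{-1,1::int}. ?M s w) \<partial>P)"
    by (intro Bochner_Integration.integral_sum[symmetric] int)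
  also have "\<dots> = (\<integral>w. max_score lam w \<partial>P)"
    by (rule Bochner_Integration.integral_cong) (auto simp: max_score_def)
  finally show ?thesis .
qed

lemma lam_diff_le_fair_obj:
  assumes i: "i \<in> {1..K}" and j: "j \<in> {1..K}"
  shows "lam j - lam i \<le> fair_obj P p K lam"
proof -
  have pi: "piS P 1 > 0" "piS P (-1) > 0" using pi_pos by auto
  let ?h = "\<lambda>w. (- lam i / piS P 1) * (if fst (snd w) = 1 then 1 else 0)
              + (lam j / piS P (-1)) * (if fst (snd w) = -1 then 1 else 0)"
  have int_S: "integrable P (\<lambda>w. (if fst (snd w) = s then 1 else (0::real)))" for s
    by (rule PP.integrable_bounded[where B=1]) auto
  have "(\<integral>w. ?h w \<partial>P) = (- lam i / piS P 1) * piS P 1 + (lam j / piS P (-1)) * piS P (-1)"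
    using int_S by (simp add: piS_eq_integral)
  also have "\<dots> = lam j - lam i" using pi by simp
  finally have "(\<integral>w. ?h w \<partial>P) = lam j - lam i" .
  moreover have "(\<integral>w. ?h w \<partial>P) \<le> (\<integral>w. max_score lam w \<partial>P)"
  proof (rule integral_mono)
    show "integrable P ?h" using int_S by auto
    show "integrable P (max_score lam)" by (rule integrable_max_score)
    fix w
    have "- lam i / piS P 1 \<le> score lam w i" if "fst (snd w) = 1"
      using that p_range by (simp add: score_def)
    moreover have "lam j / piS P (-1) \<le> score lam w j" if "fst (snd w) = -1"
      using that p_range by (simp add: score_def)
    ultimately show "?h w \<le> max_score lam w"
      using i j by (auto simp: max_score_def intro: order_trans[OF _ Max_ge])
  qed
  ultimately show ?thesis by (simp add: fair_obj_eq_integral)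
qed

lemma fair_obj_zero_le_1: "fair_obj P p K (\<lambda>_. 0) \<le> 1"
proof -
  have "max_score (\<lambda>_. 0) w \<le> 1" for w
    using K_ge_1 p_range by (auto simp: max_score_def score_def Max_le_iff)
  then have "(\<integral>w. max_score (\<lambda>_. 0) w \<partial>P) \<le> 1"
    by (intro PP.integral_le_const integrable_max_score AE_I2)
  then show ?thesis by (simp add: fair_obj_eq_integral)
qed

lemma measurable_gfair:
  "(\<lambda>q. gfair P p K lam (fst (fst q)) (snd (fst q))) \<in> (XS_space \<Otimes>\<^sub>M Z) \<rightarrow>\<^sub>M count_space UNIV"
  unfolding gfair_def
proof (rule measurable_argmaxK)
  fix k
  have S: "(\<lambda>q. snd (fst q)) \<in> (XS_space \<Otimes>\<^sub>M Z) \<rightarrow>\<^sub>M count_space UNIV" by measurable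
  have "(\<lambda>q. p k (fst (fst q)) (snd (fst q))) \<in> borel_measurable (XS_space \<Otimes>\<^sub>M Z)"
    using measurable_compose[OF measurable_fst measurable_p_XS[of k]] by (simp add: comp_def)
  then show "(\<lambda>q. piS P (snd (fst q)) * p k (fst (fst q)) (snd (fst q)) - of_int (snd (fst q)) * lam k)
      \<in> borel_measurable (XS_space \<Otimes>\<^sub>M Z)"
    using borel_measurable_countable_fun[OF S, of "piS P"] borel_measurable_countable_fun[OF S, of of_int]
    by measurable
qed

lemma rfrisk_gfair_ge: "1 - fair_obj P p K lam \<le> rfrisk P Zdet K lam (\<lambda>x s _. gfair P p K lam x s)"
proof -
  have Zdet: "prob_space Zdet" unfolding Zdet_def by (rule prob_space_return) simp
  interpret ZD: prob_space Zdet by (rule Zdet)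
  interpret PZ: pair_prob_space P Zdet by unfold_locales
  let ?G = "\<lambda>q. gfair P p K lam (fst (fst q)) (fst (snd (fst q)))"
  have range: "gfair P p K lam x s \<in> {1..K}" for x s
    unfolding gfair_def by (rule argmaxK_spec(1)[OF K_ge_1])
  have "(\<integral>q. score lam (fst q) (?G q) \<partial>(P \<Otimes>\<^sub>M Zdet)) \<le> (\<integral>q. max_score lam (fst q) \<partial>(P \<Otimes>\<^sub>M Zdet))"
  proof (rule integral_mono_AE)
    show "integrable (P \<Otimes>\<^sub>M Zdet) (\<lambda>q. score lam (fst q) (?G q))"
      by (rule integrable_score_gQ[OF Zdet measurable_gfair range])
    show "integrable (P \<Otimes>\<^sub>M Zdet) (\<lambda>q. max_score lam (fst q))"
      by (rule integrable_pair_fst[OF Zdet integrable_max_score])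
    have "AE w in P. fst (snd w) \<in> {-1,1}" using P_supp by (auto elim: AE_mp)
    then show "AE q in P \<Otimes>\<^sub>M Zdet. score lam (fst q) (?G q) \<le> max_score lam (fst q)"
      by (rule AE_mp[OF AE_pair_fst[OF Zdet]]) (auto simp: max_score_def intro!: AE_I2 Max_ge imageI range[simplified])
  qed
  also have "\<dots> = fair_obj P p K lam"
    by (simp add: integral_pair_fst[OF Zdet measurable_max_score] fair_obj_eq_integral)
  finally show ?thesis
    using rfrisk_eq_integral_score[OF Zdet measurable_gfair range, of lam] by simp
qed

section \<open>The excess fair risk for fixed data\<close>

definition pi_min :: real where
  "pi_min = min (piS P 1) (piS P (-1))"

lemma pi_min_pos: "pi_min > 0"
  using pi_pos by (simp add: pi_min_def)

lemma pi_min_le_piS: "s \<in> {-1,1} \<Longrightarrow> pi_min \<le> piS P s"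
  by (auto simp: pi_min_def)

lemma pi_min_le_1: "pi_min \<le> 1"
  using piS_le_1[of 1] by (simp add: pi_min_def)

definition l1_error :: "(nat \<Rightarrow> 'x \<Rightarrow> int \<Rightarrow> real) \<Rightarrow> real" where
  "l1_error ph = (\<integral>w. (\<Sum>k\<in>{1..K}. \<bar>ph k (fst w) (fst (snd w)) - p k (fst w) (fst (snd w))\<bar>) \<partial>P)"

definition pi_error :: "nat \<Rightarrow> (nat \<Rightarrow> 'x \<times> int) \<Rightarrow> real" where
  "pi_error N d' = (\<Sum>s\<in>{-1,1::int}. \<bar>pihat N d' s - piS P s\<bar>)"

lemma l1_error_nonneg: "0 \<le> l1_error ph"
  unfolding l1_error_def by (intro Bochner_Integration.integral_nonneg sum_nonneg) auto

lemma pi_error_nonneg: "0 \<le> pi_error N d'"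
  unfolding pi_error_def by (intro sum_nonneg) auto

lemma integrable_abs_error:
  assumes ph_meas: "\<And>k. (\<lambda>xs. ph k (fst xs) (snd xs)) \<in> borel_measurable XS_space"
    and ph_range: "\<And>k x s. 0 \<le> ph k x s \<and> ph k x s \<le> 1"
  shows "integrable P (\<lambda>w. \<Sum>k\<in>{1..K}. \<bar>ph k (fst w) (fst (snd w)) - p k (fst w) (fst (snd w))\<bar>)"
proof (rule PP.integrable_bounded[where B="real K"])
  have "(\<lambda>w. ph k (fst w) (fst (snd w))) \<in> borel_measurable P" for k
    using measurable_compose[OF measurable_XS ph_meas[of k]] by simp
  then show "(\<lambda>w. \<Sum>k\<in>{1..K}. \<bar>ph k (fst w) (fst (snd w)) - p k (fst w) (fst (snd w))\<bar>) \<in> borel_measurable P"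
    by (intro borel_measurable_sum borel_measurable_abs borel_measurable_diff measurable_p)
  fix w
  have "\<bar>ph k (fst w) (fst (snd w)) - p k (fst w) (fst (snd w))\<bar> \<le> 1" for k
    using ph_range by (simp add: abs_diff_p_le_1)
  then have "(\<Sum>k\<in>{1..K}. \<bar>ph k (fst w) (fst (snd w)) - p k (fst w) (fst (snd w))\<bar>) \<le> (\<Sum>k\<in>{1..K}. 1)"
    by (intro sum_mono)
  then show "\<bar>\<Sum>k\<in>{1..K}. \<bar>ph k (fst w) (fst (snd w)) - p k (fst w) (fst (snd w))\<bar>\<bar> \<le> real K"
    by (simp add: sum_nonneg)
qed

lemma l1_error_le:
  assumes "\<And>k. (\<lambda>xs. ph k (fst xs) (snd xs)) \<in> borel_measurable XS_space"
    and ph_range: "\<And>k x s. 0 \<le> ph k x s \<and> ph k x s \<le> 1"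
  shows "l1_error ph \<le> real K"
  unfolding l1_error_def
proof (rule PP.integral_le_const[OF integrable_abs_error[OF assms]], rule AE_I2)
  fix w
  have "\<bar>ph k (fst w) (fst (snd w)) - p k (fst w) (fst (snd w))\<bar> \<le> 1" for k
    using ph_range by (simp add: abs_diff_p_le_1)
  then show "(\<Sum>k\<in>{1..K}. \<bar>ph k (fst w) (fst (snd w)) - p k (fst w) (fst (snd w))\<bar>) \<le> real K"
    using sum_mono[of "{1..K}" "\<lambda>k. \<bar>ph k (fst w) (fst (snd w)) - p k (fst w) (fst (snd w))\<bar>" "\<lambda>_. 1"]
    by simp
qed

lemma perturbed_score_close:
  assumes s: "s \<in> {-1,1}" and k: "k \<in> {1..K}" and \<zeta>: "0 \<le> \<zeta> k" "\<zeta> k \<le> u"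
  shows "\<bar>(pihat N d' s * (ph k x s + \<zeta> k) - of_int s * lam k) - (piS P s * p k x s - of_int s * lam k)\<bar>
     \<le> pi_error N d' + (\<Sum>k\<in>{1..K}. \<bar>ph k x s - p k x s\<bar>) + u"
proof -
  have "\<bar>pihat N d' s * (ph k x s + \<zeta> k) - piS P s * p k x s\<bar>
      \<le> \<bar>ph k x s - p k x s\<bar> + \<bar>pihat N d' s - piS P s\<bar> + u"
    using perturbed_score_error[where a="pihat N d' s" and b="ph k x s" and c="piS P s"
        and d="p k x s" and z="\<zeta> k" and u=u, OF pihat_nonneg pihat_le_1] p_range \<zeta>
    by simp
  moreover have "\<bar>ph k x s - p k x s\<bar> \<le> (\<Sum>k\<in>{1..K}. \<bar>ph k x s - p k x s\<bar>)"
    using k by (intro member_le_sum) auto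
  moreover have "\<bar>pihat N d' s - piS P s\<bar> \<le> pi_error N d'"
    unfolding pi_error_def using s by (intro member_le_sum) auto
  ultimately show ?thesis by simp
qed

text \<open>The plug-in rule maximises perturbed estimates of \<open>\<pi>\<^sub>s\<close> times the scores, each within
  \<open>\<delta>\<close> of the truth, so it is \<open>2\<delta>/\<pi>\<^sub>s\<close>-optimal.\<close>
lemma max_score_le_score_ghat:
  assumes \<zeta>: "\<forall>k\<in>{1..K}. 0 \<le> \<zeta> k \<and> \<zeta> k \<le> u"
  shows "max_score lam w \<le> score lam w (ghat K N ph d' lam (fst w) (fst (snd w)) \<zeta>)
     + 2 / pi_min * (pi_error N d' + (\<Sum>k\<in>{1..K}. \<bar>ph k (fst w) (fst (snd w)) - p k (fst w) (fst (snd w))\<bar>) + u)"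
    (is "_ \<le> _ + 2 / pi_min * ?\<delta>")
proof -
  obtain x s y where w: "w = (x, s, y)" by (cases w) auto
  have "0 \<le> u" using \<zeta> K_ge_1 by auto
  then have \<delta>: "0 \<le> ?\<delta>" using pi_error_nonneg by (intro add_nonneg_nonneg sum_nonneg) auto
  let ?G = "ghat K N ph d' lam x s \<zeta>"
  show ?thesis
  proof (cases "s \<in> {-1,1}")
    case False
    then show ?thesis
      using \<delta> pi_min_pos p_range by (simp add: max_score_def score_def w)
  next
    case True
    let ?E = "\<lambda>k. pihat N d' s * (ph k x s + \<zeta> k) - of_int s * lam k"
    let ?T = "\<lambda>k. piS P s * p k x s - of_int s * lam k"
    have close: "\<bar>?E k - ?T k\<bar> \<le> ?\<delta>" if "k \<in> {1..K}" for k
      using perturbed_score_close[OF True that, where \<zeta>=\<zeta> and u=u and N=N and d'=d' and ph=ph and x=x and lam=lam]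
        \<zeta> that by (simp add: w)
    have \<pi>: "pi_min \<le> piS P s" "0 < piS P s" using True pi_min_le_piS piS_pos by auto
    have score: "score lam w k = ?T k / piS P s" for k
      using True \<pi> by (simp add: score_def w field_simps)
    have "score lam w j \<le> score lam w ?G + 2 / pi_min * ?\<delta>" if j: "j \<in> {1..K}" for j
    proof -
      have "?T j \<le> ?T ?G + 2 * ?\<delta>"
        unfolding ghat_def by (rule argmaxK_near_optimal[OF K_ge_1 close j])
      then have "score lam w j \<le> score lam w ?G + 2 * ?\<delta> / piS P s"
        using \<pi> by (simp add: score divide_right_mono add_divide_distrib[symmetric])
      also have "2 * ?\<delta> / piS P s \<le> 2 * ?\<delta> / pi_min"
        using \<pi> \<delta> pi_min_pos by (intro divide_left_mono) auto
      finally show ?thesis by simp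
    qed
    then show ?thesis
      using True K_ge_1 by (auto simp: max_score_def w intro!: Max.boundedI)
  qed
qed

lemma rfrisk_ghat_le:
  assumes u: "u > 0"
    and ph_meas: "\<And>k. (\<lambda>xs. ph k (fst xs) (snd xs)) \<in> borel_measurable XS_space"
    and ph_range: "\<And>k x s. 0 \<le> ph k x s \<and> ph k x s \<le> 1"
  shows "rfrisk P (Zfresh K u) K lam (ghat K N ph d' lam)
     \<le> 1 - fair_obj P p K lam + 2 / pi_min * (l1_error ph + pi_error N d' + u)"
proof -
  have Zf: "prob_space (Zfresh K u)" using u by (rule prob_space_Zfresh)
  let ?G = "\<lambda>q. ghat K N ph d' lam (fst (fst q)) (fst (snd (fst q))) (snd q)"
  note G_meas = measurable_ghat[where ph=ph and K=K and N=N and d'=d' and lam=lam and u=u, OF ph_meas]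
  note G_range = ghat_range[OF K_ge_1, of N ph d' lam]
  define h where "h w = max_score lam w - 2 / pi_min * (pi_error N d'
    + (\<Sum>k\<in>{1..K}. \<bar>ph k (fst w) (fst (snd w)) - p k (fst w) (fst (snd w))\<bar>) + u)" for w
  have int_h: "integrable P h"
    unfolding h_def using integrable_max_score integrable_abs_error[OF ph_meas ph_range] by simp
  have "fair_obj P p K lam - 2 / pi_min * (l1_error ph + pi_error N d' + u) = (\<integral>w. h w \<partial>P)"
    unfolding h_def l1_error_def using integrable_max_score integrable_abs_error[OF ph_meas ph_range]
    by (simp add: fair_obj_eq_integral PP.prob_space algebra_simps add_divide_distrib)
  also have "\<dots> = (\<integral>q. h (fst q) \<partial>(P \<Otimes>\<^sub>M Zfresh K u))"
    using int_h by (simp add: integral_pair_fst[OF Zf])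
  also have "\<dots> \<le> (\<integral>q. score lam (fst q) (?G q) \<partial>(P \<Otimes>\<^sub>M Zfresh K u))"
  proof (rule integral_mono_AE)
    show "integrable (P \<Otimes>\<^sub>M Zfresh K u) (\<lambda>q. h (fst q))" by (rule integrable_pair_fst[OF Zf int_h])
    show "integrable (P \<Otimes>\<^sub>M Zfresh K u) (\<lambda>q. score lam (fst q) (?G q))"
      by (rule integrable_score_gQ[OF Zf G_meas G_range])
    show "AE q in P \<Otimes>\<^sub>M Zfresh K u. h (fst q) \<le> score lam (fst q) (?G q)"
      using AE_pair_Zfresh_bounded[OF u]
    proof (rule AE_mp, intro AE_I2 impI)
      fix q :: "('x \<times> int \<times> nat) \<times> (nat \<Rightarrow> real)"
      assume "\<forall>k\<in>{1..K}. 0 \<le> snd q k \<and> snd q k \<le> u"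
      from max_score_le_score_ghat[OF this, of lam "fst q" N ph d']
      show "h (fst q) \<le> score lam (fst q) (?G q)" unfolding h_def by linarith
    qed
  qed
  also have "\<dots> = 1 - rfrisk P (Zfresh K u) K lam (ghat K N ph d' lam)"
    using rfrisk_eq_integral_score[OF Zf G_meas G_range, of lam] by simp
  finally show ?thesis by (simp add: algebra_simps)
qed

lemma fair_obj_minimizer_spread:
  assumes lam_min: "\<forall>lam. fair_obj P p K lamstar \<le> fair_obj P p K lam" and k: "k \<in> {1..K}"
  shows "\<bar>lamstar k - lamstar 1\<bar> \<le> 1"
proof -
  have one: "1 \<in> {1..K}" using K_ge_1 by simp
  have "fair_obj P p K lamstar \<le> 1"
    using lam_min fair_obj_zero_le_1 order_trans by blast
  then show ?thesis
    using lam_diff_le_fair_obj[OF k one, of lamstar] lam_diff_le_fair_obj[OF one k, of lamstar]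
    by (simp add: abs_le_iff)
qed

lemma runfair_nonneg: "0 \<le> runfair P Z K g"
  unfolding runfair_def using K_ge_1 by (intro order_trans[OF abs_ge_zero Max_ge]) auto

lemma runfair_ghat_le_1:
  assumes "u > 0" "\<And>k. (\<lambda>xs. ph k (fst xs) (snd xs)) \<in> borel_measurable XS_space"
  shows "runfair P (Zfresh K u) K (ghat K N ph d' lam) \<le> 1"
  by (rule runfair_le_1[OF prob_space_Zfresh[OF assms(1)] measurable_ghat[OF assms(2)] ghat_range[OF K_ge_1]])

lemma excess_rfrisk_ghat_le_nonempty_groups:
  assumes u: "u > 0"
    and ph_meas: "\<And>k. (\<lambda>xs. ph k (fst xs) (snd xs)) \<in> borel_measurable XS_space"
    and ph_range: "\<And>k x s. 0 \<le> ph k x s \<and> ph k x s \<le> 1"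
    and z_range: "\<And>s k i. s \<in> {-1,1} \<Longrightarrow> k \<in> {1..K} \<Longrightarrow> i < N \<Longrightarrow> 0 \<le> z (s,k,i) \<and> z (s,k,i) \<le> u"
    and N: "Nsz N d' 1 > 0" "Nsz N d' (-1) > 0"
    and lh_min: "\<And>lam. emp_obj K N ph d' z lh \<le> emp_obj K N ph d' z lam"
    and lam_min: "\<forall>lam. fair_obj P p K lamstar \<le> fair_obj P p K lam"
  shows "rfrisk P (Zfresh K u) K lamstar (ghat K N ph d' lh) - rfrisk P Zdet K lamstar (\<lambda>x s _. gfair P p K lamstar x s)
     \<le> (3 + 3 * real K) / pi_min * (l1_error ph + pi_error N d' + runfair P (Zfresh K u) K (ghat K N ph d' lh) + u)"
proof -
  let ?G = "ghat K N ph d' lh"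
  let ?U = "runfair P (Zfresh K u) K ?G"
  let ?d = "\<lambda>k. pred_rate P (Zfresh K u) ?G k 1 - pred_rate P (Zfresh K u) ?G k (-1)"
  have "\<bar>(lamstar k - lh k) - (lamstar 1 - lh 1)\<bar> \<le> 3 + 2 * u" if k: "k \<in> {1..K}" for k
    using fair_obj_minimizer_spread[OF lam_min k]
      emp_obj_minimizer_spread[where K=K and ph=ph and z=z and u=u and lh=lh, OF N K_ge_1 lh_min ph_range z_range k]
    by (simp add: abs_le_iff)
  then have "(\<Sum>k\<in>{1..K}. (lamstar k - lh k) * ?d k) \<le> real K * (3 + 2 * u) * ?U"
    by (rule penalty_le_runfair[OF prob_space_Zfresh[OF u] measurable_ghat[OF ph_meas] ghat_range[OF K_ge_1]])
  moreover have "rfrisk P (Zfresh K u) K lamstar ?G = rfrisk P (Zfresh K u) K lh ?G + (\<Sum>k\<in>{1..K}. (lamstar k - lh k) * ?d k)"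
    unfolding rfrisk_def by (simp add: left_diff_distrib sum_subtractf)
  ultimately have "rfrisk P (Zfresh K u) K lamstar ?G - rfrisk P Zdet K lamstar (\<lambda>x s _. gfair P p K lamstar x s)
      \<le> 2 / pi_min * (l1_error ph + pi_error N d' + u) + real K * (3 + 2 * u) * ?U"
    using rfrisk_ghat_le[where ph=ph and lam=lh and N=N and d'=d', OF u ph_meas ph_range] rfrisk_gfair_ge[of lamstar] lam_min[rule_format, of lh]
    by linarith
  also have "\<dots> \<le> (3 + 3 * real K) / pi_min * (l1_error ph + pi_error N d' + ?U + u)"
    using pi_min_pos pi_min_le_1 l1_error_nonneg pi_error_nonneg runfair_nonneg runfair_ghat_le_1[OF u ph_meas] u
    by (intro excess_bound_arith) auto
  finally show ?thesis .
qed

text \<open>When a group is absent from the unlabeled sample, \<open>pi_error\<close> is at least \<open>pi_min\<close> and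
  absorbs the trivial bound \<open>1 + K\<close>.\<close>
lemma excess_rfrisk_ghat_le_empty_group:
  assumes u: "u > 0"
    and ph_meas: "\<And>k. (\<lambda>xs. ph k (fst xs) (snd xs)) \<in> borel_measurable XS_space"
    and s: "s \<in> {-1,1}" "Nsz N d' s = 0"
    and lam_min: "\<forall>lam. fair_obj P p K lamstar \<le> fair_obj P p K lam"
  shows "rfrisk P (Zfresh K u) K lamstar (ghat K N ph d' lh) - rfrisk P Zdet K lamstar (\<lambda>x s _. gfair P p K lamstar x s)
     \<le> (3 + 3 * real K) / pi_min * (l1_error ph + pi_error N d' + runfair P (Zfresh K u) K (ghat K N ph d' lh) + u)"
proof -
  let ?G = "ghat K N ph d' lh"
  let ?U = "runfair P (Zfresh K u) K ?G"
  have Zf: "prob_space (Zfresh K u)" using u by (rule prob_space_Zfresh)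
  have "pihat N d' s = 0" using s(2) by (simp add: pihat_def)
  then have "piS P s \<le> pi_error N d'"
    using member_le_sum[of s "{-1,1::int}" "\<lambda>s. \<bar>pihat N d' s - piS P s\<bar>"] s(1) piS_nonneg[of s]
    by (simp add: pi_error_def)
  then have err: "pi_min \<le> pi_error N d'" using pi_min_le_piS[OF s(1)] by linarith
  have "(\<Sum>k\<in>{1..K}. lamstar k * (pred_rate P (Zfresh K u) ?G k 1 - pred_rate P (Zfresh K u) ?G k (-1)))
      \<le> real K * 1 * ?U"
    using fair_obj_minimizer_spread[OF lam_min]
    by (rule penalty_le_runfair[where c=lamstar, OF Zf measurable_ghat[OF ph_meas] ghat_range[OF K_ge_1]])
  also have "\<dots> \<le> real K" using runfair_ghat_le_1[OF u ph_meas] by (simp add: mult_left_le)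
  finally have "rfrisk P (Zfresh K u) K lamstar ?G \<le> rrisk P (Zfresh K u) ?G + real K"
    unfolding rfrisk_def by simp
  moreover have "rrisk P (Zfresh K u) ?G \<le> 1"
    unfolding rrisk_def using Zf by (intro prob_space.prob_le_1 prob_space_pair P_prob)
  ultimately have "rfrisk P (Zfresh K u) K lamstar ?G - rfrisk P Zdet K lamstar (\<lambda>x s _. gfair P p K lamstar x s)
      \<le> 1 + real K"
    using rfrisk_gfair_ge[of lamstar] lam_min[rule_format, of "\<lambda>_. 0"] fair_obj_zero_le_1 by linarith
  also have "\<dots> \<le> (1 + real K) / pi_min * pi_error N d'"
  proof -
    have "1 \<le> pi_error N d' / pi_min" using err pi_min_pos by (simp add: le_divide_eq)
    then have "(1 + real K) * 1 \<le> (1 + real K) * (pi_error N d' / pi_min)" by (intro mult_left_mono) auto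
    then show ?thesis by simp
  qed
  also have "\<dots> \<le> (3 + 3 * real K) / pi_min * (l1_error ph + pi_error N d' + ?U + u)"
  proof (rule mult_mono)
    show "(1 + real K) / pi_min \<le> (3 + 3 * real K) / pi_min"
      using pi_min_pos by (intro divide_right_mono) auto
    show "pi_error N d' \<le> l1_error ph + pi_error N d' + ?U + u"
      using l1_error_nonneg[of ph] runfair_nonneg[of "Zfresh K u" ?G] u by simp
  qed (use pi_min_pos pi_error_nonneg in auto)
  finally show ?thesis .
qed

lemma excess_rfrisk_ghat_le:
  assumes u: "u > 0"
    and ph_meas: "\<And>k. (\<lambda>xs. ph k (fst xs) (snd xs)) \<in> borel_measurable XS_space"
    and ph_range: "\<And>k x s. 0 \<le> ph k x s \<and> ph k x s \<le> 1"
    and z_range: "\<And>s k i. s \<in> {-1,1} \<Longrightarrow> k \<in> {1..K} \<Longrightarrow> i < N \<Longrightarrow> 0 \<le> z (s,k,i) \<and> z (s,k,i) \<le> u"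
    and lh_min: "Nsz N d' 1 > 0 \<and> Nsz N d' (-1) > 0 \<longrightarrow> (\<forall>lam. emp_obj K N ph d' z lh \<le> emp_obj K N ph d' z lam)"
    and lam_min: "\<forall>lam. fair_obj P p K lamstar \<le> fair_obj P p K lam"
  shows "rfrisk P (Zfresh K u) K lamstar (ghat K N ph d' lh) - rfrisk P Zdet K lamstar (\<lambda>x s _. gfair P p K lamstar x s)
     \<le> (3 + 3 * real K) / pi_min * (l1_error ph + pi_error N d' + runfair P (Zfresh K u) K (ghat K N ph d' lh) + u)"
proof (cases "Nsz N d' 1 > 0 \<and> Nsz N d' (-1) > 0")
  case True
  then show ?thesis
    using excess_rfrisk_ghat_le_nonempty_groups[where ph=ph and z=z and d'=d' and lh=lh, OF u ph_meas ph_range z_range _ _ _ lam_min]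
      lh_min by blast
next
  case False
  then obtain s where "s \<in> {-1,1::int}" "Nsz N d' s = 0" by auto
  then show ?thesis by (rule excess_rfrisk_ghat_le_empty_group[OF u ph_meas _ _ lam_min])
qed

section \<open>Averaging over the data\<close>

lemma measurable_sampleD'_S: "i < N \<Longrightarrow> (\<lambda>d'. snd (d' i)) \<in> sampleD' N P \<rightarrow>\<^sub>M count_space UNIV"
proof -
  assume "i < N"
  then have "(\<lambda>d'. d' i) \<in> sampleD' N P \<rightarrow>\<^sub>M distr P XS_space (\<lambda>w. (fst w, fst (snd w)))"
    unfolding sampleD'_def by (intro measurable_component_singleton) auto
  then have "(\<lambda>d'. d' i) \<in> sampleD' N P \<rightarrow>\<^sub>M XS_space"
    by (simp add: measurable_cong_sets[OF refl sets_distr])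
  from measurable_compose[OF this measurable_snd_XS] show ?thesis by (simp add: comp_def)
qed

lemma borel_measurable_pihat:
  assumes "f \<in> M \<rightarrow>\<^sub>M sampleD' N P" and [measurable]: "g \<in> M \<rightarrow>\<^sub>M count_space UNIV"
  shows "(\<lambda>x. pihat N (f x) (g x)) \<in> borel_measurable M"
proof -
  have eq: "pihat N d' s = (\<Sum>i<N. if snd (d' i) = s then 1 else 0) / real N" for d' s
  proof -
    have "real (Nsz N d' s) = (\<Sum>i<N. if snd (d' i) = s then 1 else (0::real))"
      unfolding Nsz_def by (simp add: sum.If_cases Int_def conj_commute)
    then show ?thesis by (simp add: pihat_def)
  qed
  have [measurable]: "(\<lambda>x. snd (f x i)) \<in> M \<rightarrow>\<^sub>M count_space UNIV" if "i < N" for i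
    using measurable_compose[OF assms(1) measurable_sampleD'_S[OF that]] by (simp add: comp_def)
  have "(\<lambda>x. (\<Sum>i<N. if snd (f x i) = g x then 1 else (0::real)) / real N) \<in> borel_measurable M"
    by measurable
  then show ?thesis by (simp add: eq)
qed

lemma borel_measurable_risks:
  fixes G :: "'t \<Rightarrow> 'x \<Rightarrow> int \<Rightarrow> 'z \<Rightarrow> nat"
  assumes Z: "prob_space Z"
    and G_meas: "(\<lambda>x. G (fst x) (fst (fst (snd x))) (fst (snd (fst (snd x)))) (snd (snd x)))
                   \<in> (T \<Otimes>\<^sub>M (P \<Otimes>\<^sub>M Z)) \<rightarrow>\<^sub>M count_space UNIV"
  shows "(\<lambda>t. rfrisk P Z K lam (G t)) \<in> borel_measurable T"
    and "(\<lambda>t. runfair P Z K (G t)) \<in> borel_measurable T"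
proof -
  interpret ZZ: prob_space Z by (rule Z)
  interpret PZ: pair_prob_space P Z by unfold_locales
  have [measurable]: "(\<lambda>x. fst (snd (fst (snd x)))) \<in> (T \<Otimes>\<^sub>M (P \<Otimes>\<^sub>M Z)) \<rightarrow>\<^sub>M count_space UNIV"
    using measurable_snd''[OF measurable_fst''[OF measurable_S, of Z], of T] by simp
  have [measurable]: "(\<lambda>x. snd (snd (fst (snd x)))) \<in> (T \<Otimes>\<^sub>M (P \<Otimes>\<^sub>M Z)) \<rightarrow>\<^sub>M count_space UNIV"
    using measurable_snd''[OF measurable_fst''[OF measurable_Y, of Z], of T] by simp
  note [measurable] = G_meas
  have rate: "(\<lambda>t. pred_rate P Z (G t) k s) \<in> borel_measurable T" for k s
  proof -
    have "(\<lambda>t. measure (P \<Otimes>\<^sub>M Z)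
             {q \<in> space (P \<Otimes>\<^sub>M Z). G t (fst (fst q)) (fst (snd (fst q))) (snd q) = k \<and> fst (snd (fst q)) = s})
          \<in> borel_measurable T"
      by (rule borel_measurable_measure_section[OF PZ.prob_space_axioms]) measurable
    then show ?thesis unfolding pred_rate_def by (simp add: case_prod_beta')
  qed
  have "(\<lambda>t. rrisk P Z (G t)) \<in> borel_measurable T"
  proof -
    have "(\<lambda>t. measure (P \<Otimes>\<^sub>M Z)
             {q \<in> space (P \<Otimes>\<^sub>M Z). G t (fst (fst q)) (fst (snd (fst q))) (snd q) \<noteq> snd (snd (fst q))})
          \<in> borel_measurable T"
      by (rule borel_measurable_measure_section[OF PZ.prob_space_axioms]) measurable
    then show ?thesis unfolding rrisk_def by (simp add: case_prod_beta')
  qed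
  with rate show "(\<lambda>t. rfrisk P Z K lam (G t)) \<in> borel_measurable T"
    unfolding rfrisk_def by measurable
  from rate show "(\<lambda>t. runfair P Z K (G t)) \<in> borel_measurable T"
    unfolding runfair_def by measurable
qed

context
  fixes n N :: nat and u :: real
    and phat :: "(nat \<Rightarrow> 'x \<times> int \<times> nat) \<Rightarrow> nat \<Rightarrow> 'x \<Rightarrow> int \<Rightarrow> real"
    and lamhat :: "(nat \<Rightarrow> 'x \<times> int \<times> nat) \<Rightarrow> (nat \<Rightarrow> 'x \<times> int) \<Rightarrow> (int \<times> nat \<times> nat \<Rightarrow> real) \<Rightarrow> nat \<Rightarrow> real"
  assumes u_pos: "u > 0"
    and phat_meas: "\<forall>k. (\<lambda>(d, x, s). phat d k x s) \<in> borel_measurable (sampleD n P \<Otimes>\<^sub>M XS_space)"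
    and phat_range: "\<forall>d k x s. 0 \<le> phat d k x s \<and> phat d k x s \<le> 1"
    and lamhat_meas: "\<forall>k. (\<lambda>(d, d', z). lamhat d d' z k)
           \<in> borel_measurable (sampleD n P \<Otimes>\<^sub>M sampleD' N P \<Otimes>\<^sub>M Zemp K N u)"
    and lamhat_min: "\<forall>d\<in>space (sampleD n P). \<forall>d'\<in>space (sampleD' N P). \<forall>z\<in>space (Zemp K N u).
         Nsz N d' 1 > 0 \<and> Nsz N d' (-1) > 0 \<longrightarrow>
         (\<forall>lam. emp_obj K N (phat d) d' z (lamhat d d' z) \<le> emp_obj K N (phat d) d' z lam)"
begin

abbreviation sample :: "((nat \<Rightarrow> 'x \<times> int \<times> nat) \<times> (nat \<Rightarrow> 'x \<times> int) \<times> (int \<times> nat \<times> nat \<Rightarrow> real)) measure"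
  where "sample \<equiv> sampleD n P \<Otimes>\<^sub>M sampleD' N P \<Otimes>\<^sub>M Zemp K N u"

abbreviation plugin ::
    "(nat \<Rightarrow> 'x \<times> int \<times> nat) \<times> (nat \<Rightarrow> 'x \<times> int) \<times> (int \<times> nat \<times> nat \<Rightarrow> real)
       \<Rightarrow> 'x \<Rightarrow> int \<Rightarrow> (nat \<Rightarrow> real) \<Rightarrow> nat" where
  "plugin t \<equiv> ghat K N (phat (fst t)) (fst (snd t)) (lamhat (fst t) (fst (snd t)) (snd (snd t)))"

lemma prob_space_sampleD: "prob_space (sampleD n P)"
  unfolding sampleD_def by (intro prob_space_PiM P_prob)

lemma prob_space_sampleD': "prob_space (sampleD' N P)"
  unfolding sampleD'_def by (intro prob_space_PiM PP.prob_space_distr measurable_XS)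

lemma prob_space_sample_tail: "prob_space (sampleD' N P \<Otimes>\<^sub>M Zemp K N u)"
  by (intro prob_space_pair prob_space_sampleD' prob_space_Zemp u_pos)

lemma prob_space_sample: "prob_space sample"
  by (intro prob_space_pair prob_space_sampleD prob_space_sample_tail)

lemma measurable_phat_section:
  "d \<in> space (sampleD n P) \<Longrightarrow> (\<lambda>xs. phat d k (fst xs) (snd xs)) \<in> borel_measurable XS_space"
proof -
  assume "d \<in> space (sampleD n P)"
  then have "(\<lambda>xs. (d, xs)) \<in> XS_space \<rightarrow>\<^sub>M (sampleD n P \<Otimes>\<^sub>M XS_space)" by measurable
  from measurable_compose[OF this phat_meas[rule_format, of k]] show ?thesis by (simp add: case_prod_beta')
qed

lemma measurable_plugin:
  "(\<lambda>x. plugin (fst x) (fst (fst (snd x))) (fst (snd (fst (snd x)))) (snd (snd x)))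
     \<in> (sample \<Otimes>\<^sub>M (P \<Otimes>\<^sub>M Zfresh K u)) \<rightarrow>\<^sub>M count_space UNIV"
  unfolding ghat_def
proof (rule measurable_argmaxK)
  fix k assume k: "k \<in> {1..K}"
  let ?M = "sample \<Otimes>\<^sub>M (P \<Otimes>\<^sub>M Zfresh K u)"
  have d: "(\<lambda>x. fst (fst x)) \<in> ?M \<rightarrow>\<^sub>M sampleD n P"
    using measurable_fst''[OF measurable_fst[of "sampleD n P" "sampleD' N P \<Otimes>\<^sub>M Zemp K N u"], of "P \<Otimes>\<^sub>M Zfresh K u"]
    by simp
  have d': "(\<lambda>x. fst (snd (fst x))) \<in> ?M \<rightarrow>\<^sub>M sampleD' N P"
    using measurable_fst''[OF measurable_snd''[OF measurable_fst[of "sampleD' N P" "Zemp K N u"], of "sampleD n P"],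
        of "P \<Otimes>\<^sub>M Zfresh K u"]
    by simp
  have xs: "(\<lambda>x. (fst (fst (snd x)), fst (snd (fst (snd x))))) \<in> ?M \<rightarrow>\<^sub>M XS_space"
    using measurable_snd''[OF measurable_fst''[OF measurable_XS, of "Zfresh K u"], of sample] by simp
  have S: "(\<lambda>x. fst (snd (fst (snd x)))) \<in> ?M \<rightarrow>\<^sub>M count_space UNIV"
    using measurable_compose[OF xs measurable_snd_XS] by simp
  have "(\<lambda>x. phat (fst (fst x)) k (fst (fst (snd x))) (fst (snd (fst (snd x))))) \<in> borel_measurable ?M"
    using measurable_compose[OF measurable_Pair[OF d xs] phat_meas[rule_format, of k]] by simp
  moreover have "(\<lambda>x. snd (snd x) k) \<in> borel_measurable ?M"
    using measurable_snd''[OF measurable_snd''[OF measurable_Zfresh_component[OF k], of P], of sample] by simp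
  moreover have "(\<lambda>x. lamhat (fst (fst x)) (fst (snd (fst x))) (snd (snd (fst x))) k) \<in> borel_measurable ?M"
    using measurable_fst''[OF lamhat_meas[rule_format, of k], of "P \<Otimes>\<^sub>M Zfresh K u"] by (simp add: case_prod_beta')
  ultimately show "(\<lambda>x. pihat N (fst (snd (fst x))) (fst (snd (fst (snd x)))) *
          (phat (fst (fst x)) k (fst (fst (snd x))) (fst (snd (fst (snd x)))) + snd (snd x) k) -
          of_int (fst (snd (fst (snd x)))) * lamhat (fst (fst x)) (fst (snd (fst x))) (snd (snd (fst x))) k)
        \<in> borel_measurable ?M"
    using borel_measurable_pihat[OF d' S] borel_measurable_countable_fun[OF S, of of_int]
    by (intro borel_measurable_diff borel_measurable_times borel_measurable_add) auto
qed

lemma borel_measurable_l1_error_phat: "(\<lambda>d. l1_error (phat d)) \<in> borel_measurable (sampleD n P)"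
proof -
  have "(\<lambda>x. phat (fst x) k (fst (snd x)) (fst (snd (snd x)))) \<in> borel_measurable (sampleD n P \<Otimes>\<^sub>M P)" for k
  proof -
    have "(\<lambda>x. (fst x, (fst (snd x), fst (snd (snd x))))) \<in> (sampleD n P \<Otimes>\<^sub>M P) \<rightarrow>\<^sub>M (sampleD n P \<Otimes>\<^sub>M XS_space)"
      using measurable_snd''[OF measurable_XS, of "sampleD n P"] by (intro measurable_Pair) auto
    from measurable_compose[OF this phat_meas[rule_format, of k]] show ?thesis by simp
  qed
  moreover have "(\<lambda>x. p k (fst (snd x)) (fst (snd (snd x)))) \<in> borel_measurable (sampleD n P \<Otimes>\<^sub>M P)" for k
    using measurable_snd''[OF measurable_p[of k], of "sampleD n P"] by simp
  ultimately have "(\<lambda>x. \<Sum>k\<in>{1..K}. \<bar>phat (fst x) k (fst (snd x)) (fst (snd (snd x)))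
                                     - p k (fst (snd x)) (fst (snd (snd x)))\<bar>) \<in> borel_measurable (sampleD n P \<Otimes>\<^sub>M P)"
    by (intro borel_measurable_sum borel_measurable_abs borel_measurable_diff) auto
  then show ?thesis
    unfolding l1_error_def by (intro PP.borel_measurable_lebesgue_integral) (simp add: case_prod_beta')
qed

lemma abs_pihat_minus_piS_le_1: "\<bar>pihat N d' s - piS P s\<bar> \<le> 1"
  using pihat_nonneg[of N d' s] pihat_le_1[of N d' s] piS_nonneg[of s] piS_le_1[of s]
  by (simp add: abs_le_iff)

lemma borel_measurable_pihat_error: "(\<lambda>d'. \<bar>pihat N d' s - piS P s\<bar>) \<in> borel_measurable (sampleD' N P)"
proof -
  have "(\<lambda>d'. pihat N d' s) \<in> borel_measurable (sampleD' N P)" by (rule borel_measurable_pihat) auto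
  then show ?thesis by (intro borel_measurable_abs borel_measurable_diff borel_measurable_const)
qed

lemma integrable_pi_error_sample: "integrable sample (\<lambda>t. pi_error N (fst (snd t)))"
  and integral_pi_error_sample:
    "(\<integral>t. pi_error N (fst (snd t)) \<partial>sample) = (\<Sum>s\<in>{-1,1::int}. \<integral>d'. \<bar>pihat N d' s - piS P s\<bar> \<partial>sampleD' N P)"
proof -
  interpret D': prob_space "sampleD' N P" by (rule prob_space_sampleD')
  interpret T: prob_space sample by (rule prob_space_sample)
  have meas: "(\<lambda>d'. pi_error N d') \<in> borel_measurable (sampleD' N P)"
    unfolding pi_error_def by (intro borel_measurable_sum borel_measurable_pihat_error)
  have int: "integrable (sampleD' N P) (\<lambda>d'. \<bar>pihat N d' s - piS P s\<bar>)" for s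
    by (rule D'.integrable_bounded[OF borel_measurable_pihat_error, where B=1]) (simp add: abs_pihat_minus_piS_le_1)
  show "integrable sample (\<lambda>t. pi_error N (fst (snd t)))"
  proof (rule T.integrable_bounded[where B=2])
    show "(\<lambda>t. pi_error N (fst (snd t))) \<in> borel_measurable sample"
      by (intro measurable_snd'' measurable_fst'' meas)
    show "\<bar>pi_error N (fst (snd t))\<bar> \<le> 2" for t
      using abs_pihat_minus_piS_le_1[of "fst (snd t)" 1] abs_pihat_minus_piS_le_1[of "fst (snd t)" "-1"]
      by (simp add: pi_error_def)
  qed
  have "(\<integral>t. pi_error N (fst (snd t)) \<partial>sample) = (\<integral>y. pi_error N (fst y) \<partial>(sampleD' N P \<Otimes>\<^sub>M Zemp K N u))"
    by (intro integral_pair_snd[OF prob_space_sampleD prob_space_sample_tail] measurable_fst''[OF meas])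
  also have "\<dots> = (\<integral>d'. pi_error N d' \<partial>sampleD' N P)"
    by (rule integral_pair_fst[OF prob_space_Zemp[OF u_pos] meas])
  also have "\<dots> = (\<Sum>s\<in>{-1,1::int}. \<integral>d'. \<bar>pihat N d' s - piS P s\<bar> \<partial>sampleD' N P)"
    unfolding pi_error_def using int by (rule Bochner_Integration.integral_sum)
  finally show "(\<integral>t. pi_error N (fst (snd t)) \<partial>sample) = (\<Sum>s\<in>{-1,1::int}. \<integral>d'. \<bar>pihat N d' s - piS P s\<bar> \<partial>sampleD' N P)" .
qed

lemma integrable_l1_error_sample: "integrable sample (\<lambda>t. l1_error (phat (fst t)))"
proof (rule finite_measure.integrable_bounded[OF prob_space.finite_measure[OF prob_space_sample], where B="real K"])
  show "(\<lambda>t. l1_error (phat (fst t))) \<in> borel_measurable sample"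
    by (intro measurable_fst'' borel_measurable_l1_error_phat)
  fix t assume "t \<in> space sample"
  then have "fst t \<in> space (sampleD n P)" by (auto simp: space_pair_measure)
  then show "\<bar>l1_error (phat (fst t))\<bar> \<le> real K"
    using l1_error_le[OF measurable_phat_section] phat_range l1_error_nonneg by (simp add: abs_le_iff)
qed

lemma AE_sample_perturbation_bounded:
  "AE t in sample. \<forall>s k i. s \<in> {-1,1} \<longrightarrow> k \<in> {1..K} \<longrightarrow> i < N \<longrightarrow>
                     0 \<le> snd (snd t) (s,k,i) \<and> snd (snd t) (s,k,i) \<le> u"
proof -
  have "AE z in Zemp K N u. \<forall>j\<in>{-1,1::int} \<times> {1..K} \<times> {..<N}. 0 \<le> z j \<and> z j \<le> u"
    unfolding Zemp_def using u_pos by (intro AE_PiM_unif_bounded) auto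
  then have "AE z in Zemp K N u. \<forall>s k i. s \<in> {-1,1} \<longrightarrow> k \<in> {1..K} \<longrightarrow> i < N \<longrightarrow> 0 \<le> z (s,k,i) \<and> z (s,k,i) \<le> u"
    by (rule AE_mp) (auto intro!: AE_I2)
  then show ?thesis
    by (intro AE_pair_snd[OF prob_space_sample_tail] AE_pair_snd[OF prob_space_Zemp[OF u_pos]])
qed

lemma AE_excess_rfrisk_plugin_le:
  assumes lam_min: "\<forall>lam. fair_obj P p K lamstar \<le> fair_obj P p K lam"
  shows "AE t in sample.
    rfrisk P (Zfresh K u) K lamstar (plugin t) - rfrisk P Zdet K lamstar (\<lambda>x s _. gfair P p K lamstar x s)
    \<le> (3 + 3 * real K) / pi_min *
       (l1_error (phat (fst t)) + pi_error N (fst (snd t)) + runfair P (Zfresh K u) K (plugin t) + u)"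
  using AE_sample_perturbation_bounded
proof (rule AE_mp, intro AE_I2 impI)
  fix t assume t: "t \<in> space sample"
    and z: "\<forall>s k i. s \<in> {-1,1} \<longrightarrow> k \<in> {1..K} \<longrightarrow> i < N \<longrightarrow> 0 \<le> snd (snd t) (s,k,i) \<and> snd (snd t) (s,k,i) \<le> u"
  have "fst t \<in> space (sampleD n P)" "fst (snd t) \<in> space (sampleD' N P)" "snd (snd t) \<in> space (Zemp K N u)"
    using t by (auto simp: space_pair_measure)
  with lamhat_min have "Nsz N (fst (snd t)) 1 > 0 \<and> Nsz N (fst (snd t)) (-1) > 0 \<longrightarrow>
      (\<forall>lam. emp_obj K N (phat (fst t)) (fst (snd t)) (snd (snd t)) (lamhat (fst t) (fst (snd t)) (snd (snd t)))
          \<le> emp_obj K N (phat (fst t)) (fst (snd t)) (snd (snd t)) lam)" by blast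
  from excess_rfrisk_ghat_le[OF u_pos measurable_phat_section[OF \<open>fst t \<in> _\<close>] _ _ this lam_min]
  show "rfrisk P (Zfresh K u) K lamstar (plugin t) - rfrisk P Zdet K lamstar (\<lambda>x s _. gfair P p K lamstar x s)
    \<le> (3 + 3 * real K) / pi_min *
       (l1_error (phat (fst t)) + pi_error N (fst (snd t)) + runfair P (Zfresh K u) K (plugin t) + u)"
    using phat_range z by blast
qed

lemma expected_excess_rfrisk_le:
  assumes lam_min: "\<forall>lam. fair_obj P p K lamstar \<le> fair_obj P p K lam"
  shows "(\<integral>t. rfrisk P (Zfresh K u) K lamstar (plugin t) \<partial>sample)
           - rfrisk P Zdet K lamstar (\<lambda>x s _. gfair P p K lamstar x s)
         \<le> (3 + 3 * real K) / pi_min *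
            ((\<integral>d. (\<integral>w. (\<Sum>k\<in>{1..K}. \<bar>phat d k (fst w) (fst (snd w)) - p k (fst w) (fst (snd w))\<bar>) \<partial>P)
                  \<partial>sampleD n P)
             + (\<Sum>s\<in>{-1,1::int}. \<integral>d'. \<bar>pihat N d' s - piS P s\<bar> \<partial>sampleD' N P)
             + (\<integral>t. runfair P (Zfresh K u) K (plugin t) \<partial>sample) + u)"
    (is "_ - ?c \<le> ?C * _")
proof -
  interpret T: prob_space sample by (rule prob_space_sample)
  have Zf: "prob_space (Zfresh K u)" using u_pos by (rule prob_space_Zfresh)
  let ?f = "\<lambda>t. rfrisk P (Zfresh K u) K lamstar (plugin t)"
  let ?U = "\<lambda>t. runfair P (Zfresh K u) K (plugin t)"
  let ?a = "\<lambda>t. l1_error (phat (fst t))"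
  let ?b = "\<lambda>t. pi_error N (fst (snd t))"
  have int_f: "integrable sample ?f"
    using borel_measurable_risks(1)[OF Zf measurable_plugin] abs_rfrisk_le[OF Zf]
    by (rule T.integrable_bounded)
  have int_U: "integrable sample ?U"
    using borel_measurable_risks(2)[OF Zf measurable_plugin] abs_runfair_le[OF Zf]
    by (rule T.integrable_bounded)
  note int_a = integrable_l1_error_sample and int_b = integrable_pi_error_sample
  have "(\<integral>t. ?f t \<partial>sample) - ?c = (\<integral>t. ?f t - ?c \<partial>sample)"
    using int_f by (simp add: T.prob_space)
  also have "\<dots> \<le> (\<integral>t. ?C * (?a t + ?b t + ?U t + u) \<partial>sample)"
    using int_f int_a int_b int_U AE_excess_rfrisk_plugin_le[OF lam_min] by (intro integral_mono_AE) auto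
  also have "\<dots> = ?C * ((\<integral>t. ?a t \<partial>sample) + (\<integral>t. ?b t \<partial>sample) + (\<integral>t. ?U t \<partial>sample) + u)"
    using int_a int_b int_U by (simp add: T.prob_space)
  also have "(\<integral>t. ?a t \<partial>sample) = (\<integral>d. l1_error (phat d) \<partial>sampleD n P)"
    by (rule integral_pair_fst[OF prob_space_sample_tail borel_measurable_l1_error_phat])
  finally show ?thesis unfolding integral_pi_error_sample l1_error_def .
qed

end

end

theorem theorem2:
  fixes P :: "('x::euclidean_space \<times> int \<times> nat) measure"
    and K :: nat
    and p :: "nat \<Rightarrow> 'x \<Rightarrow> int \<Rightarrow> real"
    and lamstar :: "nat \<Rightarrow> real"
  assumes P_prob: "prob_space P"
    and P_sets: "sets P = sets XSY_space"
    and P_supp: "AE w in P. fst (snd w) \<in> {-1, 1} \<and> snd (snd w) \<in> {1..K}"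
    and pi_pos: "\<forall>s\<in>{-1, 1}. piS P s > 0"
    and p_meas: "\<forall>k. (\<lambda>(x, s). p k x s) \<in> borel_measurable XS_space"
    and p_range: "\<forall>k x s. 0 \<le> p k x s \<and> p k x s \<le> 1"
    and p_cond: "\<forall>k A. A \<in> sets XS_space \<longrightarrow>
        measure P {w \<in> space P. (fst w, fst (snd w)) \<in> A \<and> snd (snd w) = k}
        = (\<integral>w. indicator A (fst w, fst (snd w)) * p k (fst w) (fst (snd w)) \<partial>P)"
    and continuity: "\<forall>k\<in>{1..K}. \<forall>j\<in>{1..K}. \<forall>s\<in>{-1, 1}. k \<noteq> j \<longrightarrow>
        continuous_on UNIV (\<lambda>t. measure P {w \<in> space P. fst (snd w) = s \<and>
            p k (fst w) (fst (snd w)) - p j (fst w) (fst (snd w)) \<le> t} / piS P s)"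
    and lam_min: "\<forall>lam. fair_obj P p K lamstar \<le> fair_obj P p K lam"
  shows "\<exists>C>0. \<forall>(n::nat) (N::nat) (u::real)
      (phat :: (nat \<Rightarrow> 'x \<times> int \<times> nat) \<Rightarrow> nat \<Rightarrow> 'x \<Rightarrow> int \<Rightarrow> real)
      (lamhat :: (nat \<Rightarrow> 'x \<times> int \<times> nat) \<Rightarrow> (nat \<Rightarrow> 'x \<times> int) \<Rightarrow> (int \<times> nat \<times> nat \<Rightarrow> real) \<Rightarrow> nat \<Rightarrow> real).
      u > 0 \<longrightarrow>
      (\<forall>k. (\<lambda>(d, x, s). phat d k x s) \<in> borel_measurable (sampleD n P \<Otimes>\<^sub>M XS_space)) \<longrightarrow>
      (\<forall>d k x s. 0 \<le> phat d k x s \<and> phat d k x s \<le> 1) \<longrightarrow>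
      (\<forall>k. (\<lambda>(d, d', z). lamhat d d' z k)
           \<in> borel_measurable (sampleD n P \<Otimes>\<^sub>M sampleD' N P \<Otimes>\<^sub>M Zemp K N u)) \<longrightarrow>
      (\<forall>d\<in>space (sampleD n P). \<forall>d'\<in>space (sampleD' N P). \<forall>z\<in>space (Zemp K N u).
         Nsz N d' 1 > 0 \<and> Nsz N d' (-1) > 0 \<longrightarrow>
         (\<forall>lam. emp_obj K N (phat d) d' z (lamhat d d' z) \<le> emp_obj K N (phat d) d' z lam)) \<longrightarrow>
      (\<integral>t. rfrisk P (Zfresh K u) K lamstar
              (ghat K N (phat (fst t)) (fst (snd t)) (lamhat (fst t) (fst (snd t)) (snd (snd t))))
         \<partial>(sampleD n P \<Otimes>\<^sub>M sampleD' N P \<Otimes>\<^sub>M Zemp K N u))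
      - rfrisk P Zdet K lamstar (\<lambda>x s _. gfair P p K lamstar x s)
      \<le> C * ((\<integral>d. (\<integral>w. (\<Sum>k\<in>{1..K}. \<bar>phat d k (fst w) (fst (snd w)) - p k (fst w) (fst (snd w))\<bar>) \<partial>P)
                  \<partial>sampleD n P)
            + (\<Sum>s\<in>{-1, 1::int}. \<integral>d'. \<bar>pihat N d' s - piS P s\<bar> \<partial>sampleD' N P)
            + (\<integral>t. runfair P (Zfresh K u) K
                    (ghat K N (phat (fst t)) (fst (snd t)) (lamhat (fst t) (fst (snd t)) (snd (snd t))))
                 \<partial>(sampleD n P \<Otimes>\<^sub>M sampleD' N P \<Otimes>\<^sub>M Zemp K N u))
            + u)"
proof -
  interpret fair_classification P K p
    by (rule fair_classification.intro[OF P_prob P_sets P_supp pi_pos p_meas p_range p_cond])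
  show ?thesis
  proof (intro exI[of _ "(3 + 3 * real K) / pi_min"] conjI allI impI)
    show "(3 + 3 * real K) / pi_min > 0" using pi_min_pos by simp
  qed (rule expected_excess_rfrisk_le[OF _ _ _ _ _ lam_min])
qed

end
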